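(* Let $(\mu^{(0)},(\mu^{(1)},r^{(1)}),\dots,(\mu^{(n)},r^{(n)}))$ be a rigged configuration for $A^{(1)}_n$ with $\mu^{(0)}=(\mu^{(0)}_1,\dots,\mu^{(0)}_L)$, let $\tau_{k,d}$ be its tau functions, and let $\bar\tau_{k,d}$ be defined exactly as $\tau_{k,d}$ but with $|s^{(1)}|$ replaced by $|s^{(1)}|+|\nu^{(1)}|$ in the defining maximum (equivalently, the tau functions of the data with each rigging $r^{(1)}_i$ replaced by $r^{(1)}_i+\mu^{(1)}_i$). Then for all $1\le k\le L$ and $2\le d\le n+1$, $$\tau_{k-1,d}+\bar\tau_{k,d-1}=\max\big(\bar\tau_{k,d}+\tau_{k-1,d-1},\ \tau_{k,d}+\bar\tau_{k-1,d-1}-\mu^{(0)}_k\big).$$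
   Context: Notation: for finite multisets (or sequences) of positive integers $\lambda=(\lambda_1,\dots,\lambda_k)$, $\mu=(\mu_1,\dots,\mu_m)$ write $|\lambda|=\sum_i\lambda_i$, $\lambda_{[N]}=(\lambda_1,\dots,\lambda_N)$ ($\lambda_{[0]}=\emptyset$), $\min(\lambda,\mu)=\sum_{i=1}^k\sum_{j=1}^m\min(\lambda_i,\mu_j)$, and $\lambda\subseteq\mu$ means inclusion of multisets (with multiplicity). Rigged configuration: data $(\mu^{(0)},(\mu^{(1)},r^{(1)}),\dots,(\mu^{(n)},r^{(n)}))$ where $\mu^{(0)}=(\mu^{(0)}_1,\dots,\mu^{(0)}_L)$ is a sequence of positive integers and, for $1\le a\le n$, $(\mu^{(a)},r^{(a)})$ is a finite multiset of pairs $(\mu^{(a)}_i,r^{(a)}_i)$ (row length $\mu^{(a)}_i\in\mathbb Z_{\ge1}$, rigging $r^{(a)}_i\in\mathbb Z$) such that $0\le r^{(a)}_i\le p^{(a)}_{\mu^{(a)}_i}$, where the vacancy numbers are $p^{(a)}_j=E^{(a-1)}_j-2E^{(a)}_j+E^{(a+1)}_j$ with $E^{(a)}_j=\sum_k\min(j,\mu^{(a)}_k)$ for $0\le a\le n$ and $E^{(n+1)}_j=0$. Tau functions: for $\lambda\subseteq\mu^{(0)}$ and $1\le d\le n+1$, $$\tau_d(\lambda)=\max\Big\{\min(\lambda,\nu^{(1)})+\sum_{a=1}^{n-1}\min(\nu^{(a)},\nu^{(a+1)})-\sum_{a=1}^{n}\min(\nu^{(a)},\nu^{(a)})-\sum_{a=1}^n|s^{(a)}|-|\nu^{(d)}|\Big\},$$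 the maximum being over all independent choices, for each $1\le a\le n$, of a sub-multiset of pairs $\{(\nu^{(a)}_i,s^{(a)}_i)\}\subseteq\{(\mu^{(a)}_i,r^{(a)}_i)\}$ (with $\nu^{(a)}$ the chosen lengths and $s^{(a)}$ the chosen riggings), and with the convention $|\nu^{(n+1)}|=0$; also $\tau_0(\lambda)=\tau_{n+1}(\lambda)-|\lambda|$. Set $\tau_{k,d}=\tau_d(\mu^{(0)}_{[k]})$ for $0\le k\le L$, $0\le d\le n+1$. *)

theory Defs
  imports Main "HOL-Library.Multiset"
begin

text \<open>A rigged configuration for A_n^(1): mu0 is the list (mu0_1,...,mu0_L);
  cfg a (for 1 <= a <= n) is the multiset of pairs (row length, rigging).
  Values of cfg outside 1..n are irrelevant.\<close>

definition minm :: "nat multiset \<Rightarrow> nat multiset \<Rightarrow> int" where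
  "minm lam mu = (\<Sum>x\<in>#lam. \<Sum>y\<in>#mu. int (min x y))"

definition Efun :: "nat \<Rightarrow> nat list \<Rightarrow> (nat \<Rightarrow> (nat \<times> int) multiset) \<Rightarrow> nat \<Rightarrow> nat \<Rightarrow> int" where
  "Efun n mu0 cfg a j =
     (if a = 0 then (\<Sum>x\<leftarrow>mu0. int (min j x))
      else if a \<le> n then (\<Sum>p\<in>#cfg a. int (min j (fst p)))
      else 0)"

definition vacancy :: "nat \<Rightarrow> nat list \<Rightarrow> (nat \<Rightarrow> (nat \<times> int) multiset) \<Rightarrow> nat \<Rightarrow> nat \<Rightarrow> int" where
  "vacancy n mu0 cfg a j =
     Efun n mu0 cfg (a - 1) j - 2 * Efun n mu0 cfg a j + Efun n mu0 cfg (a + 1) j"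

definition rigged_config :: "nat \<Rightarrow> nat list \<Rightarrow> (nat \<Rightarrow> (nat \<times> int) multiset) \<Rightarrow> bool" where
  "rigged_config n mu0 cfg \<longleftrightarrow>
     (\<forall>x\<in>set mu0. 0 < x) \<and>
     (\<forall>a\<in>{1..n}. \<forall>p\<in>#cfg a. 0 < fst p \<and> 0 \<le> snd p \<and> snd p \<le> vacancy n mu0 cfg a (fst p))"

definition choices :: "nat \<Rightarrow> (nat \<Rightarrow> (nat \<times> int) multiset) \<Rightarrow> (nat \<Rightarrow> (nat \<times> int) multiset) set" where
  "choices n cfg = {S. (\<forall>a\<in>{1..n}. S a \<subseteq># cfg a) \<and> (\<forall>a. a \<notin> {1..n} \<longrightarrow> S a = {#})}"

definition tau_obj :: "nat \<Rightarrow> nat multiset \<Rightarrow> (nat \<Rightarrow> (nat \<times> int) multiset) \<Rightarrow> nat \<Rightarrow> int" where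
  "tau_obj n lam S d =
     (let nu = (\<lambda>a. image_mset fst (S a)); s = (\<lambda>a. image_mset snd (S a)) in
      minm lam (nu 1)
      + (\<Sum>a=1..<n. minm (nu a) (nu (a + 1)))
      - (\<Sum>a=1..n. minm (nu a) (nu a))
      - (\<Sum>a=1..n. sum_mset (s a))
      - (if 1 \<le> d \<and> d \<le> n then int (sum_mset (nu d)) else 0))"

definition tau :: "nat \<Rightarrow> (nat \<Rightarrow> (nat \<times> int) multiset) \<Rightarrow> nat multiset \<Rightarrow> nat \<Rightarrow> int" where
  "tau n cfg lam d =
     (if d = 0 then Max ((\<lambda>S. tau_obj n lam S (n + 1)) ` choices n cfg) - int (sum_mset lam)
      else Max ((\<lambda>S. tau_obj n lam S d) ` choices n cfg))"

definition tauk :: "nat \<Rightarrow> nat list \<Rightarrow> (nat \<Rightarrow> (nat \<times> int) multiset) \<Rightarrow> nat \<Rightarrow> nat \<Rightarrow> int" where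
  "tauk n mu0 cfg k d = tau n cfg (mset (take k mu0)) d"

definition bar_cfg :: "(nat \<Rightarrow> (nat \<times> int) multiset) \<Rightarrow> nat \<Rightarrow> (nat \<times> int) multiset" where
  "bar_cfg cfg a = (if a = 1 then image_mset (\<lambda>(m, r). (m, r + int m)) (cfg 1) else cfg a)"

end

theory Submission
  imports Defs "HOL-Analysis.Fashoda_Theorem"
begin

(* Every tau function is a maximum over choices S of sub-multisets, so both sides of the
   identity are maxima over pairs (S, T).  Written in terms of the column lengths
   S_a(j) = #{rows of S a of length >= j}, the objectives become quadratic forms of Cartan type,
   and for each of the three sums of tau functions one finds

     4 f(S, T) + energy(h) = Psi(S + T),

   where Psi (joint_value) depends only on the union S + T and energy(h) is the energy, in the
   direction a, of the height function h(a, j) = profile(a) + S_a(j) - T_a(j) on the grid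
   {0..n+1} x {1..J}.  The three sums differ only in the values of h in column 0, namely
   c, -c and 2 - c with c(j) = [l < j].

   A new height function whose steps are dominated by the old ones (no larger in absolute value,
   of the same parity) is again the height function of a pair with the same union, and its
   energy is no larger.  Folding by x |-> |x| or x |-> 1 - |x - 1| therefore bounds both sums
   on the right by the left-hand side.  Conversely, reflecting through 0 the component of
   {h >= 1} that contains the top of column 0, or through 1 the component of {h <= 0} that
   contains its bottom, bounds the left-hand side by one of the sums on the right; by a discrete
   Fashoda argument at least one of the two components stays away from the top row. *)

section \<open>Column lengths\<close>

definition rows_ge :: "(nat \<times> int) multiset \<Rightarrow> nat \<Rightarrow> int" where
  "rows_ge M j = int (size (filter_mset (\<lambda>p. j \<le> fst p) M))"

definition rows_eq :: "(nat \<times> int) multiset \<Rightarrow> nat \<Rightarrow> int" where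
  "rows_eq M j = int (size (filter_mset (\<lambda>p. fst p = j) M))"

definition parts_ge :: "nat multiset \<Rightarrow> nat \<Rightarrow> int" where
  "parts_ge lam j = int (size (filter_mset (\<lambda>x. j \<le> x) lam))"

lemma rows_ge_empty [simp]: "rows_ge {#} j = 0"
  by (simp add: rows_ge_def)

lemma rows_ge_union [simp]: "rows_ge (M + N) j = rows_ge M j + rows_ge N j"
  by (simp add: rows_ge_def)

lemma rows_eq_union [simp]: "rows_eq (M + N) j = rows_eq M j + rows_eq N j"
  by (simp add: rows_eq_def)

lemma rows_ge_sum: "finite A \<Longrightarrow> rows_ge (\<Sum>i\<in>A. f i) j = (\<Sum>i\<in>A. rows_ge (f i) j)"
  by (induction A rule: finite_induct) auto

lemma rows_ge_minus_rows_ge_Suc: "rows_ge M j - rows_ge M (j + 1) = rows_eq M j"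
proof -
  have "filter_mset (\<lambda>p. j \<le> fst p) M
      = filter_mset (\<lambda>p. fst p = j) M + filter_mset (\<lambda>p. j + 1 \<le> fst p) M"
    by (auto simp: multiset_eq_iff)
  then show ?thesis by (simp add: rows_ge_def rows_eq_def)
qed

lemma col_diff_step:
  "(rows_ge M j - rows_ge N j) - (rows_ge M (j + 1) - rows_ge N (j + 1))
     = rows_eq (M - N) j - rows_eq (N - M) j"
proof -
  have "M = (M \<inter># N) + (M - N)" "N = (M \<inter># N) + (N - M)"
    by (auto simp: multiset_eq_iff)
  then have "rows_ge M i - rows_ge N i = rows_ge (M - N) i - rows_ge (N - M) i" for i
    by (metis add_diff_cancel_left rows_ge_union)
  then show ?thesis
    using rows_ge_minus_rows_ge_Suc[of "M - N" j] rows_ge_minus_rows_ge_Suc[of "N - M" j] by simp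
qed

lemma rows_ge_eq_sum_mset: "rows_ge M j = (\<Sum>p\<in>#M. if j \<le> fst p then 1 else 0)"
  by (induction M) (auto simp: rows_ge_def)

lemma parts_ge_eq_sum_mset: "parts_ge lam j = (\<Sum>x\<in>#lam. if j \<le> x then 1 else 0)"
  by (induction lam) (auto simp: parts_ge_def)

lemma parts_ge_image_fst [simp]: "parts_ge (image_mset fst M) j = rows_ge M j"
  by (simp add: parts_ge_def rows_ge_def filter_mset_image_mset)

lemma parts_ge_singleton [simp]: "parts_ge {#x#} j = (if j \<le> x then 1 else 0)"
  by (simp add: parts_ge_def)

lemma sum_mset_sum_swap: "(\<Sum>p\<in>#M. \<Sum>j\<in>A. f p j) = (\<Sum>j\<in>A. \<Sum>p\<in>#M. f p j)"
  by (induction M) (auto simp: sum.distrib)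

lemma sum_indicator_atMost:
  assumes "m \<le> J"
  shows "(\<Sum>j=1..J. if j \<le> m then 1 else 0 :: int) = int m"
proof -
  have "(\<Sum>j=1..J. if j \<le> m then 1 else 0 :: int) = (\<Sum>j=1..m. if j \<le> m then 1 else 0)"
    using assms by (intro sum.mono_neutral_right) auto
  then show ?thesis by simp
qed

lemma min_eq_sum_indicators:
  assumes "y \<le> J"
  shows "int (min x y) = (\<Sum>j=1..J. (if j \<le> x then 1 else 0) * (if j \<le> y then 1 else 0 :: int))"
proof -
  have "(\<Sum>j=1..J. (if j \<le> x then 1 else 0) * (if j \<le> y then 1 else 0 :: int))
      = (\<Sum>j=1..J. if j \<le> min x y then 1 else 0)"
    by (rule sum.cong) auto
  then show ?thesis using sum_indicator_atMost[of "min x y" J] assms by simp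
qed

lemma minm_eq_sum_parts_ge:
  assumes "\<forall>p\<in>#N. fst p \<le> J"
  shows "minm lam (image_mset fst N) = (\<Sum>j=1..J. parts_ge lam j * rows_ge N j)"
proof -
  have "minm lam (image_mset fst N) = (\<Sum>x\<in>#lam. \<Sum>q\<in>#N. int (min x (fst q)))"
    by (simp add: minm_def image_mset.compositionality o_def)
  also have "\<dots> = (\<Sum>x\<in>#lam. \<Sum>q\<in>#N. \<Sum>j=1..J.
      (if j \<le> x then 1 else 0) * (if j \<le> fst q then 1 else 0 :: int))"
    using assms by (intro arg_cong[where f = sum_mset] image_mset_cong min_eq_sum_indicators) auto
  also have "\<dots> = (\<Sum>j=1..J. parts_ge lam j * rows_ge N j)"
    by (simp add: sum_mset_sum_swap rows_ge_eq_sum_mset parts_ge_eq_sum_mset sum_mset_product)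
  finally show ?thesis .
qed

lemma sum_fst_eq_sum_rows_ge:
  assumes "\<forall>p\<in>#M. fst p \<le> J"
  shows "int (sum_mset (image_mset fst M)) = (\<Sum>j=1..J. rows_ge M j)"
proof -
  have "int (sum_mset (image_mset fst M)) = (\<Sum>p\<in>#M. int (fst p))"
    by (induction M) auto
  also have "\<dots> = (\<Sum>p\<in>#M. \<Sum>j=1..J. if j \<le> fst p then 1 else 0)"
    using assms
    by (intro arg_cong[where f = sum_mset] image_mset_cong sum_indicator_atMost[symmetric]) auto
  finally show ?thesis by (simp add: sum_mset_sum_swap rows_ge_eq_sum_mset)
qed

section \<open>A quadratic identity\<close>

(* The quadratic part of the tau objective: minus one half of the Cartan form of type A_n. *)
definition cartan_form :: "nat \<Rightarrow> (nat \<Rightarrow> int) \<Rightarrow> int" where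
  "cartan_form n x = (\<Sum>a=1..<n. x a * x (a + 1)) - (\<Sum>a=1..n. (x a)\<^sup>2)"

lemma cartan_form_parallelogram:
  "2 * cartan_form n s + 2 * cartan_form n t
     = cartan_form n (\<lambda>a. s a + t a) + cartan_form n (\<lambda>a. s a - t a)"
  by (simp add: cartan_form_def sum_distrib_left sum.distrib[symmetric] sum_subtractf[symmetric]
      power2_eq_square algebra_simps)

lemma sum_sq_diffs_eq_cartan_form:
  fixes e :: "nat \<Rightarrow> int"
  assumes "e 0 = 0" "e (n + 1) = 0"
  shows "(\<Sum>a=0..n. (e a - e (a + 1))\<^sup>2) = - 2 * cartan_form n e"
proof -
  have expand: "(\<Sum>a=0..m. (e a - e (a + 1))\<^sup>2)
      = (e 0)\<^sup>2 + (e (m + 1))\<^sup>2 + 2 * (\<Sum>a=1..m. (e a)\<^sup>2) - 2 * (\<Sum>a=0..m. e a * e (a + 1))" for m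
    by (induction m) (simp_all add: power2_eq_square algebra_simps)
  have "(\<Sum>a=0..n. e a * e (a + 1)) = (\<Sum>a=1..n. e a * e (a + 1))"
    using assms by (simp add: sum.atLeast_Suc_atMost)
  also have "\<dots> = (\<Sum>a=1..<n. e a * e (a + 1))"
    using assms by (cases n) (simp_all add: atLeastLessThanSuc_atLeastAtMost[symmetric])
  finally have "(\<Sum>a=0..n. e a * e (a + 1)) = (\<Sum>a=1..<n. e a * e (a + 1))" .
  then show ?thesis using expand[of n] assms by (simp add: cartan_form_def)
qed

text \<open>The height profile of the empty pair of choices, with value \<open>c\<close> in column \<open>0\<close>.\<close>
definition profile :: "nat \<Rightarrow> nat \<Rightarrow> int \<Rightarrow> nat \<Rightarrow> int" where
  "profile n d c a = (if a = 0 then c else if a \<le> n then (if d \<le> a then 1 else 0) else 1)"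

lemma profile_sq_diffs:
  assumes "2 \<le> d" "d \<le> n + 1"
  shows "(\<Sum>a=0..n. (profile n d c a - profile n d c (a + 1))\<^sup>2) = c\<^sup>2 + 1"
proof -
  have "(\<Sum>a=1..n. (profile n d c a - profile n d c (a + 1))\<^sup>2) = (\<Sum>a=1..n. if a = d - 1 then 1 else 0)"
    using assms by (intro sum.cong) (auto simp: profile_def)
  also have "\<dots> = 1"
    using assms by (subst sum.delta) auto
  finally show ?thesis using assms by (simp add: sum.atLeast_Suc_atMost profile_def)
qed

lemma profile_cross_diffs:
  fixes D :: "nat \<Rightarrow> int"
  assumes "2 \<le> d" "d \<le> n + 1" "D 0 = 0"
  shows "(\<Sum>a=0..n. (D a - D (a + 1)) * (profile n d c a - profile n d c (a + 1)))
       = D d - D (d - 1) - c * D 1"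
proof -
  have "(\<Sum>a=1..n. (D a - D (a + 1)) * (profile n d c a - profile n d c (a + 1)))
      = (\<Sum>a=1..n. if a = d - 1 then D (a + 1) - D a else 0)"
    using assms by (intro sum.cong) (auto simp: profile_def)
  also have "\<dots> = D (d - 1 + 1) - D (d - 1)"
    using assms by (subst sum.delta) auto
  finally show ?thesis using assms by (simp add: sum.atLeast_Suc_atMost profile_def algebra_simps)
qed

lemma quadratic_identity:
  fixes s t E :: "nat \<Rightarrow> int" and c :: int
  assumes "2 \<le> d" "d \<le> n + 1"
    and "s 0 = 0" "t 0 = 0" "s (n + 1) = 0" "t (n + 1) = 0"
    and E: "\<And>a. E a = profile n d c a + (s a - t a)"
  shows "4 * cartan_form n s + 4 * cartan_form n t + (\<Sum>a=0..n. (E a - E (a + 1))\<^sup>2)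
       = 2 * cartan_form n (\<lambda>a. s a + t a)
         + 2 * ((s d - t d) - (s (d - 1) - t (d - 1)) - c * (s 1 - t 1)) + c\<^sup>2 + 1"
proof -
  define D where "D = (\<lambda>a. s a - t a)"
  define h where "h = profile n d c"
  have "(E a - E (a + 1))\<^sup>2 = (D a - D (a + 1))\<^sup>2 + 2 * ((D a - D (a + 1)) * (h a - h (a + 1)))
      + (h a - h (a + 1))\<^sup>2" for a
    by (simp add: E D_def h_def power2_eq_square algebra_simps)
  then have "(\<Sum>a=0..n. (E a - E (a + 1))\<^sup>2)
      = (\<Sum>a=0..n. (D a - D (a + 1))\<^sup>2) + 2 * (\<Sum>a=0..n. (D a - D (a + 1)) * (h a - h (a + 1)))
        + (\<Sum>a=0..n. (h a - h (a + 1))\<^sup>2)"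
    by (simp add: sum.distrib sum_distrib_left)
  also have "\<dots> = - 2 * cartan_form n D + 2 * (D d - D (d - 1) - c * D 1) + c\<^sup>2 + 1"
    using assms sum_sq_diffs_eq_cartan_form[of D n] profile_cross_diffs[of d n D c]
      profile_sq_diffs[of d n c]
    by (simp add: D_def h_def)
  finally show ?thesis
    using cartan_form_parallelogram[of n s t] by (simp add: D_def algebra_simps)
qed

lemma exists_submset_of_size:
  assumes "k \<le> size M"
  obtains N where "N \<subseteq># M" "size N = k"
proof -
  obtain xs where M: "M = mset xs" by (metis ex_mset)
  have "mset (take k xs) \<subseteq># mset (take k xs @ drop k xs)"
    by (simp only: mset_append mset_subset_eq_add_left)
  then show thesis using that assms M by simp
qed

lemma rows_ge_single_length:
  assumes "\<forall>p\<in>#X. fst p = i"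
  shows "rows_ge X j = (if j \<le> i then int (size X) else 0)"
proof -
  have "filter_mset (\<lambda>p. j \<le> fst p) X = (if j \<le> i then X else {#})"
    using assms by (auto simp: filter_mset_eq_conv)
  then show ?thesis by (simp add: rows_ge_def)
qed

lemma sum_filter_lengths:
  assumes "\<forall>p\<in>#Z. fst p \<in> A" "finite A"
  shows "(\<Sum>i\<in>A. filter_mset (\<lambda>p. fst p = i) Z) = Z"
proof (rule multiset_eqI)
  fix x
  have "(\<Sum>i\<in>A. count (filter_mset (\<lambda>p. fst p = i) Z) x) = (\<Sum>i\<in>A. if i = fst x then count Z x else 0)"
    by (intro sum.cong) auto
  also have "\<dots> = count Z x"
    using assms by (auto simp: not_in_iff[symmetric])
  finally show "count (\<Sum>i\<in>A. filter_mset (\<lambda>p. fst p = i) Z) x = count Z x"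
    by (simp add: count_sum)
qed

lemma sum_subset_mset_mono:
  "finite A \<Longrightarrow> (\<And>i. i \<in> A \<Longrightarrow> X i \<subseteq># Y i) \<Longrightarrow> (\<Sum>i\<in>A. X i) \<subseteq># (\<Sum>i\<in>A. Y i)"
  by (induction A rule: finite_induct) (auto intro: subset_mset.add_mono)

lemma rows_ge_sum_single_lengths:
  assumes "finite A" "\<And>i. i \<in> A \<Longrightarrow> \<forall>p\<in>#Y i. fst p = i"
  shows "rows_ge (\<Sum>i\<in>A. Y i) j = (\<Sum>i\<in>A. if j \<le> i then int (size (Y i)) else 0)"
  unfolding rows_ge_sum[OF assms(1)] using assms(2)
  by (intro sum.cong refl rows_ge_single_length) auto

lemma sum_steps_from:
  fixes D :: "nat \<Rightarrow> int"
  assumes "\<forall>i\<ge>J. D i = 0" "1 \<le> j"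
  shows "(\<Sum>i\<in>{1..<J}. if j \<le> i then D i - D (i + 1) else 0) = D j"
proof -
  have "(\<Sum>i\<in>{1..<J}. if j \<le> i then D i - D (i + 1) else 0) = (\<Sum>i\<in>{j..<J}. D i - D (Suc i))"
    using assms(2) by (simp add: sum.If_cases) (rule sum.cong, auto)
  also have "\<dots> = D j"
    using assms(1) sum_Suc_diff'[of j J "\<lambda>i. - D i"] by (cases "j \<le> J") (auto simp: sum_negf)
  finally show ?thesis .
qed

lemma exists_half_step:
  fixes r u :: int
  assumes "\<bar>u\<bar> \<le> r" "even (u + r)"
  obtains k :: nat where "2 * int k = r + u" "int k \<le> r"
proof -
  have "even (r + u)" using assms(2) by (simp add: add.commute)
  then obtain m where "r + u = 2 * m" by (elim evenE)
  then show thesis using that[of "nat m"] assms(1) by auto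
qed

text \<open>Take \<open>k\<^sub>j\<close> of the \<open>Z\<^sub>j\<close> rows of length \<open>j\<close> of \<open>Z\<close>, where \<open>2 k\<^sub>j = Z\<^sub>j + D j - D (j + 1)\<close>.\<close>
lemma submset_with_col_diffs:
  fixes Z :: "(nat \<times> int) multiset" and D :: "nat \<Rightarrow> int"
  assumes lengths: "\<forall>p\<in>#Z. 0 < fst p \<and> fst p < J"
    and D_top: "\<forall>j\<ge>J. D j = 0"
    and steps: "\<forall>j\<ge>1. \<bar>D j - D (j + 1)\<bar> \<le> rows_eq Z j \<and> even (D j - D (j + 1) + rows_eq Z j)"
  shows "\<exists>X. X \<subseteq># Z \<and> (\<forall>j\<ge>1. 2 * rows_ge X j - rows_ge Z j = D j)"
proof -
  define level where "level i = filter_mset (\<lambda>p. fst p = i) Z" for i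
  have size_level: "int (size (level i)) = rows_eq Z i" for i
    by (simp add: level_def rows_eq_def)
  have "\<exists>Y. Y \<subseteq># level j \<and> (1 \<le> j \<longrightarrow> 2 * int (size Y) = rows_eq Z j + (D j - D (j + 1)))" for j
  proof (cases "1 \<le> j")
    case True
    then have "\<bar>D j - D (j + 1)\<bar> \<le> rows_eq Z j" "even (D j - D (j + 1) + rows_eq Z j)"
      using steps by auto
    then obtain k where k: "2 * int k = rows_eq Z j + (D j - D (j + 1))" "int k \<le> rows_eq Z j"
      by (rule exists_half_step)
    then have "k \<le> size (level j)" using size_level[of j] by simp
    then obtain Y where "Y \<subseteq># level j" "size Y = k" by (rule exists_submset_of_size)
    then show ?thesis using k(1) by blast
  qed auto
  then obtain Y where Y: "\<And>j. Y j \<subseteq># level j"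
    "\<And>j. 1 \<le> j \<Longrightarrow> 2 * int (size (Y j)) = rows_eq Z j + (D j - D (j + 1))"
    by metis
  have lengths_Y: "\<forall>p\<in>#Y i. fst p = i" and lengths_level: "\<forall>p\<in>#level i. fst p = i" for i
    using Y(1)[of i] by (auto simp: level_def dest: mset_subset_eqD)
  have Z_levels: "Z = (\<Sum>i\<in>{1..<J}. level i)"
    unfolding level_def using lengths by (intro sum_filter_lengths[symmetric]) auto
  define X where "X = (\<Sum>i\<in>{1..<J}. Y i)"
  have "X \<subseteq># Z"
    unfolding X_def by (subst Z_levels) (simp add: sum_subset_mset_mono Y(1))
  moreover have "2 * rows_ge X j - rows_ge Z j = D j" if "1 \<le> j" for j
  proof -
    have "rows_ge X j = (\<Sum>i\<in>{1..<J}. if j \<le> i then int (size (Y i)) else 0)"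
      unfolding X_def by (rule rows_ge_sum_single_lengths[OF finite_atLeastLessThan lengths_Y])
    moreover have "rows_ge Z j = (\<Sum>i\<in>{1..<J}. if j \<le> i then rows_eq Z i else 0)"
      by (subst Z_levels, subst rows_ge_sum_single_lengths[OF finite_atLeastLessThan lengths_level])
        (intro sum.cong refl, simp add: size_level)
    ultimately have "2 * rows_ge X j - rows_ge Z j
        = (\<Sum>i\<in>{1..<J}. if j \<le> i then D i - D (i + 1) else 0)"
      by (simp add: sum_distrib_left sum_subtractf[symmetric] if_distrib Y(2) cong: if_cong)
    then show ?thesis using sum_steps_from[OF D_top that] by simp
  qed
  ultimately show ?thesis by blast
qed

text \<open>Rows common to \<open>M\<close> and \<open>N\<close> stay on both sides; only the symmetric difference is
  redistributed.\<close>
lemma redistribute_with_col_diffs: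
  fixes M N :: "(nat \<times> int) multiset" and D :: "nat \<Rightarrow> int"
  assumes lengths: "\<forall>p\<in>#M + N. 0 < fst p \<and> fst p < J"
    and D_top: "\<forall>j\<ge>J. D j = 0"
    and steps: "\<forall>j\<ge>1. \<bar>D j - D (j + 1)\<bar> \<le> rows_eq ((M - N) + (N - M)) j
      \<and> even (D j - D (j + 1) + rows_eq ((M - N) + (N - M)) j)"
  shows "\<exists>M' N'. M' + N' = M + N \<and> M' \<subseteq># M \<union># N \<and> N' \<subseteq># M \<union># N
    \<and> (\<forall>j\<ge>1. rows_ge M' j - rows_ge N' j = D j)"
proof -
  define Z where "Z = (M - N) + (N - M)"
  have "\<forall>p\<in>#Z. 0 < fst p \<and> fst p < J"
    using lengths by (auto simp: Z_def dest: in_diffD)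
  then obtain X where X: "X \<subseteq># Z" "\<forall>j\<ge>1. 2 * rows_ge X j - rows_ge Z j = D j"
    using submset_with_col_diffs D_top steps unfolding Z_def by blast
  have union: "(M \<inter># N) + Z = M \<union># N" by (auto simp: Z_def multiset_eq_iff)
  have Z_split: "Z = X + (Z - X)" using X(1) by simp
  show ?thesis
  proof (intro exI conjI)
    have "(M \<inter># N + X) + (M \<inter># N + (Z - X)) = M \<inter># N + (M \<inter># N + Z)"
      by (subst (2) Z_split) (simp add: ac_simps)
    also have "\<dots> = M + N"
      unfolding union by (auto simp: multiset_eq_iff min_def max_def)
    finally show "(M \<inter># N + X) + (M \<inter># N + (Z - X)) = M + N" .
    show "M \<inter># N + X \<subseteq># M \<union># N" "M \<inter># N + (Z - X) \<subseteq># M \<union># N"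
      unfolding union[symmetric] using X(1) by (auto intro: subset_mset.add_left_mono)
    show "\<forall>j\<ge>1. rows_ge (M \<inter># N + X) j - rows_ge (M \<inter># N + (Z - X)) j = D j"
      using X(2) Z_split[THEN arg_cong, of "\<lambda>Y. rows_ge Y _"] by simp
  qed
qed

section \<open>Walks on the square grid\<close>

definition grid_pt :: "int \<times> int \<Rightarrow> real^2" where
  "grid_pt p = vector [real_of_int (fst p), real_of_int (snd p)]"

definition grid_adj :: "int \<times> int \<Rightarrow> int \<times> int \<Rightarrow> bool" where
  "grid_adj p q \<longleftrightarrow> \<bar>fst p - fst q\<bar> + \<bar>snd p - snd q\<bar> \<le> 1"

definition adj_within :: "(int \<times> int) set \<Rightarrow> int \<times> int \<Rightarrow> int \<times> int \<Rightarrow> bool" where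
  "adj_within U p q \<longleftrightarrow> p \<in> U \<and> q \<in> U \<and> grid_adj p q"

definition grid_segments :: "(int \<times> int) set \<Rightarrow> (real^2) set" where
  "grid_segments U = \<Union>{closed_segment (grid_pt p) (grid_pt q) | p q. adj_within U p q}"

lemma grid_pt_nth [simp]:
  "grid_pt p $ 1 = real_of_int (fst p)" "grid_pt p $ 2 = real_of_int (snd p)"
  by (simp_all add: grid_pt_def)

lemma grid_adj_sym: "grid_adj p q \<Longrightarrow> grid_adj q p"
  by (auto simp: grid_adj_def abs_minus_commute)

lemma adj_walk_in: "(adj_within U)\<^sup>*\<^sup>* p q \<Longrightarrow> p \<in> U \<Longrightarrow> q \<in> U"
  by (induction rule: rtranclp_induct) (auto simp: adj_within_def)

lemma adj_walk_sym: "(adj_within U)\<^sup>*\<^sup>* p q \<Longrightarrow> (adj_within U)\<^sup>*\<^sup>* q p"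
proof (induction rule: rtranclp_induct)
  case (step y z)
  then have "adj_within U z y" by (auto simp: adj_within_def grid_adj_sym)
  then show ?case using step(3) by (rule converse_rtranclp_into_rtranclp)
qed simp

lemma adj_walk_mono: "U \<subseteq> U' \<Longrightarrow> (adj_within U)\<^sup>*\<^sup>* p q \<Longrightarrow> (adj_within U')\<^sup>*\<^sup>* p q"
  by (rule rtranclp_mono[THEN predicate2D]) (auto simp: adj_within_def)

lemma adj_walk_row:
  assumes "x0 \<le> x1" "\<And>x. x0 \<le> x \<Longrightarrow> x \<le> x1 \<Longrightarrow> (x, y) \<in> U"
  shows "(adj_within U)\<^sup>*\<^sup>* (x0, y) (x1, y)"
proof -
  have "(adj_within U)\<^sup>*\<^sup>* (x0, y) (x0 + int m, y)" if "x0 + int m \<le> x1" for m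
    using that
  proof (induction m)
    case (Suc m)
    then have "adj_within U (x0 + int m, y) (x0 + int (Suc m), y)"
      using assms(2) by (auto simp: adj_within_def grid_adj_def)
    with Suc show ?case by (auto intro: rtranclp.rtrancl_into_rtrancl)
  qed simp
  from this[of "nat (x1 - x0)"] show ?thesis using assms(1) by simp
qed

lemma adj_walk_col:
  assumes "y0 \<le> y1" "\<And>y. y0 \<le> y \<Longrightarrow> y \<le> y1 \<Longrightarrow> (x, y) \<in> U"
  shows "(adj_within U)\<^sup>*\<^sup>* (x, y0) (x, y1)"
proof -
  have "(adj_within U)\<^sup>*\<^sup>* (x, y0) (x, y0 + int m)" if "y0 + int m \<le> y1" for m
    using that
  proof (induction m)
    case (Suc m)
    then have "adj_within U (x, y0 + int m) (x, y0 + int (Suc m))"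
      using assms(2) by (auto simp: adj_within_def grid_adj_def)
    with Suc show ?case by (auto intro: rtranclp.rtrancl_into_rtrancl)
  qed simp
  from this[of "nat (y1 - y0)"] show ?thesis using assms(1) by simp
qed

lemma path_of_adj_walk:
  assumes "(adj_within U)\<^sup>*\<^sup>* x y" "x \<in> U"
  obtains g where "path g" "pathstart g = grid_pt x" "pathfinish g = grid_pt y"
    "path_image g \<subseteq> grid_segments U"
proof -
  have "\<exists>g. path g \<and> pathstart g = grid_pt x \<and> pathfinish g = grid_pt y \<and> path_image g \<subseteq> grid_segments U"
    using assms
  proof (induction rule: rtranclp_induct)
    case base
    have "adj_within U x x" using base by (simp add: adj_within_def grid_adj_def)
    then have "closed_segment (grid_pt x) (grid_pt x) \<subseteq> grid_segments U"
      unfolding grid_segments_def by blast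
    then show ?case
      by (intro exI[of _ "linepath (grid_pt x) (grid_pt x)"])
        (simp only: path_linepath pathstart_linepath pathfinish_linepath path_image_linepath simp_thms)
  next
    case (step y z)
    then obtain g where g: "path g" "pathstart g = grid_pt x" "pathfinish g = grid_pt y"
      "path_image g \<subseteq> grid_segments U" by blast
    have "closed_segment (grid_pt y) (grid_pt z) \<subseteq> grid_segments U"
      using step(2) unfolding grid_segments_def by blast
    with g show ?case
      by (intro exI[of _ "g +++ linepath (grid_pt y) (grid_pt z)"]) (auto simp: path_image_join)
  qed
  then show thesis using that by blast
qed

lemma grid_edge_coords:
  assumes "grid_adj p q" "z \<in> closed_segment (grid_pt p) (grid_pt q)"
  shows "of_int (min (fst p) (fst q)) \<le> z$1 \<and> z$1 \<le> of_int (max (fst p) (fst q))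
    \<and> of_int (min (snd p) (snd q)) \<le> z$2 \<and> z$2 \<le> of_int (max (snd p) (snd q))"
proof -
  have "fst p = fst q \<or> snd p = snd q" using assms(1) by (auto simp: grid_adj_def)
  then show ?thesis
    using assms(2) by (auto simp: segment_vertical segment_horizontal min_def max_def)
qed

lemma int_between_adjacent:
  fixes a c x :: int
  assumes "\<bar>a - c\<bar> \<le> 1" "min a c \<le> x" "x \<le> max a c"
  shows "x = a \<or> x = c"
  using assms by (auto simp: min_def max_def split: if_splits)

lemma grid_edges_meet:
  assumes "grid_adj p q" "grid_adj p' q'"
    and "z \<in> closed_segment (grid_pt p) (grid_pt q)" "z \<in> closed_segment (grid_pt p') (grid_pt q')"
  shows "\<exists>w. (w = p \<or> w = q) \<and> (w = p' \<or> w = q')"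
proof -
  define w where "w = (max (min (fst p) (fst q)) (min (fst p') (fst q')),
                       max (min (snd p) (snd q)) (min (snd p') (snd q')))"
  have "min (fst p) (fst q) \<le> fst w" "fst w \<le> max (fst p) (fst q)"
    "min (snd p) (snd q) \<le> snd w" "snd w \<le> max (snd p) (snd q)"
    "min (fst p') (fst q') \<le> fst w" "fst w \<le> max (fst p') (fst q')"
    "min (snd p') (snd q') \<le> snd w" "snd w \<le> max (snd p') (snd q')"
    using grid_edge_coords[OF assms(1,3)] grid_edge_coords[OF assms(2,4)]
    unfolding w_def by (simp_all del: of_int_min of_int_max)
  moreover have "w = p \<or> w = q" if "grid_adj p q" "min (fst p) (fst q) \<le> fst w"
    "fst w \<le> max (fst p) (fst q)" "min (snd p) (snd q) \<le> snd w" "snd w \<le> max (snd p) (snd q)"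
    for p q
    using that int_between_adjacent[of "fst p" "fst q" "fst w"]
      int_between_adjacent[of "snd p" "snd q" "snd w"]
    by (cases p, cases q, cases w) (auto simp: grid_adj_def)
  ultimately show ?thesis using assms(1,2) by blast
qed

lemma grid_segments_disjoint:
  assumes "U \<inter> W = {}"
  shows "grid_segments U \<inter> grid_segments W = {}"
  using grid_edges_meet assms unfolding grid_segments_def adj_within_def by blast

lemma grid_segments_subset_box:
  assumes "\<forall>p\<in>U. x0 \<le> fst p \<and> fst p \<le> x1 \<and> y0 \<le> snd p \<and> snd p \<le> y1"
  shows "grid_segments U \<subseteq> cbox (vector [of_int x0, of_int y0]) (vector [of_int x1, of_int y1])"
proof -
  have box: "grid_pt p \<in> cbox (vector [of_int x0, of_int y0]) (vector [of_int x1, of_int y1])"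
    if "p \<in> U" for p
    using assms that by (auto simp: mem_box_cart forall_2)
  show ?thesis
  proof
    fix z assume "z \<in> grid_segments U"
    then obtain p q where "p \<in> U" "q \<in> U" "z \<in> closed_segment (grid_pt p) (grid_pt q)"
      unfolding grid_segments_def adj_within_def by blast
    then show "z \<in> cbox (vector [of_int x0, of_int y0]) (vector [of_int x1, of_int y1])"
      using closed_segment_subset[OF box box convex_box(1)] by blast
  qed
qed

lemma grid_walks_cross:
  assumes "U \<inter> W = {}"
    and "\<forall>p\<in>U \<union> W. x0 \<le> fst p \<and> fst p \<le> x1 \<and> y0 \<le> snd p \<and> snd p \<le> y1"
    and "(adj_within U)\<^sup>*\<^sup>* (x0, yL) (x1, yR)" "(x0, yL) \<in> U"
    and "(adj_within W)\<^sup>*\<^sup>* (xB, y0) (xT, y1)" "(xB, y0) \<in> W"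
  shows False
proof -
  obtain f where f: "path f" "pathstart f = grid_pt (x0, yL)" "pathfinish f = grid_pt (x1, yR)"
    "path_image f \<subseteq> grid_segments U"
    using path_of_adj_walk[OF assms(3,4)] .
  obtain g where g: "path g" "pathstart g = grid_pt (xB, y0)" "pathfinish g = grid_pt (xT, y1)"
    "path_image g \<subseteq> grid_segments W"
    using path_of_adj_walk[OF assms(5,6)] .
  define a where "a = (vector [of_int x0, of_int y0] :: real^2)"
  define b where "b = (vector [of_int x1, of_int y1] :: real^2)"
  have "path_image f \<subseteq> cbox a b" "path_image g \<subseteq> cbox a b"
    using f(4) g(4) grid_segments_subset_box[of U] grid_segments_subset_box[of W] assms(2)
    unfolding a_def b_def by blast+
  moreover have "pathstart f $ 1 = a $ 1" "pathfinish f $ 1 = b $ 1"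
    "pathstart g $ 2 = a $ 2" "pathfinish g $ 2 = b $ 2"
    using f(2,3) g(2,3) unfolding a_def b_def by simp_all
  ultimately obtain z where "z \<in> path_image f" "z \<in> path_image g"
    using fashoda[OF f(1) g(1)] by blast
  then show False using f(4) g(4) grid_segments_disjoint[OF assms(1)] by blast
qed

definition dominated_step :: "int \<Rightarrow> int \<Rightarrow> bool" where
  "dominated_step u v \<longleftrightarrow> \<bar>u\<bar> \<le> \<bar>v\<bar> \<and> even (u - v)"

lemma dominated_step_abs: "dominated_step (\<bar>x\<bar> - \<bar>y\<bar>) (x - y)"
proof -
  have "even (\<bar>x\<bar> - x)" "even (\<bar>y\<bar> - y)" by (auto simp: abs_if)
  then have "even ((\<bar>x\<bar> - x) - (\<bar>y\<bar> - y))" by simp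
  then show ?thesis by (simp add: dominated_step_def abs_triangle_ineq3 algebra_simps)
qed

text \<open>The step of \<open>x \<mapsto> 1 - \<bar>x - 1\<bar>\<close>, in simplifier normal form.\<close>
lemma dominated_step_fold_one: "dominated_step (\<bar>y - 1\<bar> - \<bar>x - 1\<bar>) (x - y)"
proof -
  have "dominated_step (\<bar>y - 1\<bar> - \<bar>x - 1\<bar>) ((y - 1) - (x - 1))"
    by (rule dominated_step_abs)
  then show ?thesis by (simp add: dominated_step_def abs_minus_commute algebra_simps)
qed

lemma dominated_step_reflect:
  assumes "(x - v) * (y - v) \<le> 0"
  shows "dominated_step ((2 * v - x) - y) (x - y)"
proof -
  have "((v - x) + (v - y))\<^sup>2 \<le> ((v - y) - (v - x))\<^sup>2"
    using assms by (simp add: power2_eq_square algebra_simps)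
  then have "\<bar>(2 * v - x) - y\<bar> \<le> \<bar>x - y\<bar>"
    by (simp add: abs_le_square_iff[symmetric] algebra_simps)
  moreover have "(2 * v - x) - y - (x - y) = 2 * (v - x)" by simp
  ultimately show ?thesis by (simp add: dominated_step_def)
qed

lemma dominated_step_within:
  assumes "dominated_step u (p - q)" "0 \<le> p" "0 \<le> q"
  shows "\<bar>u\<bar> \<le> p + q \<and> even (u + (p + q))"
proof -
  have "u + (p + q) = (u - (p - q)) + 2 * p" by simp
  then show ?thesis using assms by (auto simp: dominated_step_def)
qed

lemma dominated_step_sq: "dominated_step u v \<Longrightarrow> u\<^sup>2 \<le> v\<^sup>2"
  by (simp add: dominated_step_def abs_le_square_iff[symmetric])

lemma finite_submsets: "finite {N. N \<subseteq># M}"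
proof (rule finite_subset)
  show "{N. N \<subseteq># M} \<subseteq> (\<Union>k\<le>size M. multisets_of_size (set_mset M) k)"
    by (auto simp: multisets_of_size_def dest: set_mset_mono size_mset_mono)
qed auto

lemma finite_choices: "finite (choices n cfg)"
proof (rule finite_subset)
  let ?ext = "\<lambda>f a. if a \<in> {1..n} then f a else {#}"
  show "choices n cfg \<subseteq> ?ext ` (\<Pi>\<^sub>E a\<in>{1..n}. {N. N \<subseteq># cfg a})"
  proof
    fix S assume S: "S \<in> choices n cfg"
    then have "S = ?ext (restrict S {1..n})" by (auto simp: choices_def)
    moreover have "restrict S {1..n} \<in> (\<Pi>\<^sub>E a\<in>{1..n}. {N. N \<subseteq># cfg a})"
      using S by (simp add: choices_def)
    ultimately show "S \<in> ?ext ` (\<Pi>\<^sub>E a\<in>{1..n}. {N. N \<subseteq># cfg a})" by blast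
  qed
  show "finite (?ext ` (\<Pi>\<^sub>E a\<in>{1..n}. {N. N \<subseteq># cfg a}))"
    by (intro finite_imageI finite_PiE finite_submsets) simp
qed

lemma empty_choice: "(\<lambda>a. {#}) \<in> choices n cfg"
  by (simp add: choices_def)

lemma Max_add_Max:
  fixes f g :: "'a \<Rightarrow> int"
  assumes "finite C" "C \<noteq> {}"
  shows "Max (f ` C) + Max (g ` C) = Max ((\<lambda>(S, T). f S + g T) ` (C \<times> C))"
proof (rule Max_eqI[symmetric])
  have "Max (f ` C) \<in> f ` C" "Max (g ` C) \<in> g ` C" using assms by simp_all
  then show "Max (f ` C) + Max (g ` C) \<in> (\<lambda>(S, T). f S + g T) ` (C \<times> C)"
    by force
  show "y \<le> Max (f ` C) + Max (g ` C)" if "y \<in> (\<lambda>(S, T). f S + g T) ` (C \<times> C)" for y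
    using that assms by (auto intro!: add_mono)
qed (use assms in simp)

lemma Max_eq_max_if_dominated:
  fixes f g h :: "'a \<Rightarrow> int"
  assumes fin: "finite P" "P \<noteq> {}"
    and "\<forall>x\<in>P. \<exists>y\<in>P. g x \<le> f y" "\<forall>x\<in>P. \<exists>y\<in>P. h x \<le> f y"
    and "\<forall>x\<in>P. \<exists>y\<in>P. f x \<le> g y \<or> f x \<le> h y"
  shows "Max (f ` P) = max (Max (g ` P)) (Max (h ` P))"
proof (rule antisym)
  have le_Max: "F y \<le> Max (F ` P)" if "y \<in> P" for F :: "'a \<Rightarrow> int" and y
    using fin(1) that by simp
  show "Max (f ` P) \<le> max (Max (g ` P)) (Max (h ` P))"
  proof (rule Max.boundedI)
    fix z assume "z \<in> f ` P"
    then obtain x y where "z = f x" "y \<in> P" "f x \<le> g y \<or> f x \<le> h y" using assms(5) by blast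
    then show "z \<le> max (Max (g ` P)) (Max (h ` P))"
      using le_Max[of y g] le_Max[of y h] by linarith
  qed (use fin in auto)
  have "g x \<le> Max (f ` P) \<and> h x \<le> Max (f ` P)" if "x \<in> P" for x
  proof -
    obtain y z where "y \<in> P" "g x \<le> f y" "z \<in> P" "h x \<le> f z" using assms(3,4) \<open>x \<in> P\<close> by blast
    then show ?thesis using le_Max[of y f] le_Max[of z f] by linarith
  qed
  then have "Max (g ` P) \<le> Max (f ` P)" "Max (h ` P) \<le> Max (f ` P)"
    using fin by (auto intro!: Max.boundedI)
  then show "max (Max (g ` P)) (Max (h ` P)) \<le> Max (f ` P)" by simp
qed

definition shift_rig :: "nat \<times> int \<Rightarrow> nat \<times> int" where
  "shift_rig p = (fst p, snd p + int (fst p))"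

definition shift_first :: "(nat \<Rightarrow> (nat \<times> int) multiset) \<Rightarrow> nat \<Rightarrow> (nat \<times> int) multiset" where
  "shift_first S = S(1 := image_mset shift_rig (S 1))"

lemma bar_cfg_eq_shift_first: "bar_cfg cfg = shift_first cfg"
  by (rule ext) (simp add: bar_cfg_def shift_first_def shift_rig_def[abs_def] case_prod_beta')

lemma choices_bar_cfg:
  assumes "1 \<le> n"
  shows "choices n (bar_cfg cfg) = shift_first ` choices n cfg"
proof (intro equalityI subsetI)
  fix S' assume "S' \<in> shift_first ` choices n cfg"
  then show "S' \<in> choices n (bar_cfg cfg)"
    using assms
    by (auto simp: choices_def bar_cfg_eq_shift_first shift_first_def image_mset_subseteq_mono)
next
  let ?unshift = "\<lambda>p. (fst p, snd p - int (fst p))"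
  fix S' assume S': "S' \<in> choices n (bar_cfg cfg)"
  define S where "S = S'(1 := image_mset ?unshift (S' 1))"
  have "S' 1 \<subseteq># bar_cfg cfg 1"
    using S' assms by (auto simp: choices_def)
  then have "S' 1 \<subseteq># image_mset shift_rig (cfg 1)"
    by (simp add: bar_cfg_eq_shift_first shift_first_def)
  then have "image_mset ?unshift (S' 1) \<subseteq># cfg 1"
    using image_mset_subseteq_mono[of _ _ ?unshift]
    by (fastforce simp: image_mset.compositionality o_def shift_rig_def)
  then have "S \<in> choices n cfg"
    using S' by (auto simp: choices_def S_def bar_cfg_def)
  moreover have "shift_first S = S'"
    by (auto simp: shift_first_def S_def shift_rig_def image_mset.compositionality o_def)
  ultimately show "S' \<in> shift_first ` choices n cfg" by blast
qed

lemma tau_obj_shift_first: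
  assumes "1 \<le> n"
  shows "tau_obj n lam (shift_first S) dd = tau_obj n lam S dd - int (sum_mset (image_mset fst (S 1)))"
proof -
  have "(\<Sum>a=1..n. sum_mset (image_mset snd (shift_first S a)))
      = (\<Sum>a=1..n. sum_mset (image_mset snd (S a)) + (if a = 1 then int (sum_mset (image_mset fst (S 1))) else 0))"
    by (intro sum.cong refl)
      (auto simp: shift_first_def shift_rig_def sum_mset.distrib image_mset.compositionality o_def)
  also have "\<dots> = (\<Sum>a=1..n. sum_mset (image_mset snd (S a))) + int (sum_mset (image_mset fst (S 1)))"
    using assms by (simp add: sum.distrib)
  moreover have "image_mset fst (shift_first S a) = image_mset fst (S a)" for a
    by (simp add: shift_first_def shift_rig_def image_mset.compositionality o_def)
  ultimately show ?thesis by (simp add: tau_obj_def)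
qed

lemma tau_obj_add_part:
  "tau_obj n (add_mset x lam) S dd = tau_obj n lam S dd + minm {#x#} (image_mset fst (S 1))"
  by (simp add: tau_obj_def minm_def)

lemma tau_obj_eq_tau_obj_top:
  "tau_obj n lam S dd = tau_obj n lam S (n + 1)
     - (if 1 \<le> dd \<and> dd \<le> n then int (sum_mset (image_mset fst (S dd))) else 0)"
  by (simp add: tau_obj_def)

section \<open>The energy identity\<close>

locale tau_setting =
  fixes n d :: nat and cfg :: "nat \<Rightarrow> (nat \<times> int) multiset" and lam :: "nat multiset"
    and l J :: nat
  assumes d_ge: "2 \<le> d" and d_le: "d \<le> n + 1" and l_pos: "1 \<le> l" and l_less_J: "l < J"
    and cfg_lengths: "\<forall>a\<in>{1..n}. \<forall>p\<in>#cfg a. 0 < fst p \<and> fst p < J"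
begin

abbreviation C where "C \<equiv> choices n cfg"

lemma n_pos: "1 \<le> n"
  using d_ge d_le by simp

lemma choice_outside: "S \<in> C \<Longrightarrow> a \<notin> {1..n} \<Longrightarrow> S a = {#}"
  by (simp add: choices_def)

lemma choice_subset: "S \<in> C \<Longrightarrow> a \<in> {1..n} \<Longrightarrow> S a \<subseteq># cfg a"
  by (simp add: choices_def)

lemma choice_lengths:
  assumes "S \<in> C" "p \<in># S a"
  shows "0 < fst p \<and> fst p < J"
proof -
  have "a \<in> {1..n}" using assms choice_outside by fastforce
  then show ?thesis
    using assms choice_subset cfg_lengths by (meson mset_subset_eqD)
qed

lemma rows_ge_choice_outside: "S \<in> C \<Longrightarrow> a \<notin> {1..n} \<Longrightarrow> rows_ge (S a) j = 0"
  by (simp add: choice_outside)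

lemma rows_ge_choice_beyond:
  assumes "S \<in> C" "J \<le> j"
  shows "rows_ge (S a) j = 0"
proof -
  have "filter_mset (\<lambda>p. j \<le> fst p) (S a) = {#}"
    using choice_lengths[OF assms(1)] assms(2) by (fastforce simp: filter_mset_eq_conv)
  then show ?thesis by (simp add: rows_ge_def)
qed

definition base_obj :: "(nat \<Rightarrow> (nat \<times> int) multiset) \<Rightarrow> int" where
  "base_obj S = tau_obj n lam S (n + 1)"

definition part_size :: "(nat \<Rightarrow> (nat \<times> int) multiset) \<Rightarrow> nat \<Rightarrow> int" where
  "part_size S a = (if 1 \<le> a \<and> a \<le> n then int (sum_mset (image_mset fst (S a))) else 0)"

definition part_gain :: "(nat \<Rightarrow> (nat \<times> int) multiset) \<Rightarrow> int" where
  "part_gain S = minm {#l#} (image_mset fst (S 1))"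

definition rig_total :: "(nat \<Rightarrow> (nat \<times> int) multiset) \<Rightarrow> int" where
  "rig_total S = (\<Sum>a=1..n. sum_mset (image_mset snd (S a)))"

lemma base_obj_eq_sum_cols:
  assumes "S \<in> C"
  shows "base_obj S = (\<Sum>j=1..J. parts_ge lam j * rows_ge (S 1) j + cartan_form n (\<lambda>a. rows_ge (S a) j))
    - rig_total S"
proof -
  have bound: "\<forall>p\<in>#S a. fst p \<le> J" for a
    using choice_lengths[OF assms] by (simp add: less_imp_le)
  have minm_cols: "minm (image_mset fst (S a)) (image_mset fst (S b))
      = (\<Sum>j=1..J. rows_ge (S a) j * rows_ge (S b) j)" for a b
    using minm_eq_sum_parts_ge[OF bound] by simp
  have "base_obj S = (\<Sum>j=1..J. parts_ge lam j * rows_ge (S 1) j)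
      + (\<Sum>a=1..<n. \<Sum>j=1..J. rows_ge (S a) j * rows_ge (S (a + 1)) j)
      - (\<Sum>a=1..n. \<Sum>j=1..J. rows_ge (S a) j * rows_ge (S a) j) - rig_total S"
    by (simp add: base_obj_def tau_obj_def rig_total_def minm_cols minm_eq_sum_parts_ge[OF bound])
  moreover have "(\<Sum>a=1..<n. \<Sum>j=1..J. rows_ge (S a) j * rows_ge (S (a + 1)) j)
      = (\<Sum>j=1..J. \<Sum>a=1..<n. rows_ge (S a) j * rows_ge (S (a + 1)) j)"
    "(\<Sum>a=1..n. \<Sum>j=1..J. rows_ge (S a) j * rows_ge (S a) j)
      = (\<Sum>j=1..J. \<Sum>a=1..n. rows_ge (S a) j * rows_ge (S a) j)"
    by (rule sum.swap)+
  ultimately show ?thesis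
    by (simp add: cartan_form_def sum.distrib sum_subtractf power2_eq_square)
qed

lemma part_size_eq_sum_cols:
  assumes "S \<in> C"
  shows "part_size S a = (\<Sum>j=1..J. rows_ge (S a) j)"
proof (cases "a \<in> {1..n}")
  case True
  then show ?thesis
    using sum_fst_eq_sum_rows_ge[of "S a" J] choice_lengths[OF assms]
    by (auto simp: part_size_def less_imp_le)
qed (auto simp: part_size_def rows_ge_choice_outside[OF assms])

lemma part_gain_eq_sum_cols:
  assumes "S \<in> C"
  shows "part_gain S = (\<Sum>j=1..J. (if j \<le> l then 1 else 0) * rows_ge (S 1) j)"
  using minm_eq_sum_parts_ge[of "S 1" J "{#l#}"] choice_lengths[OF assms]
  by (simp add: part_gain_def less_imp_le)

lemma l_eq_sum_cols: "int l = (\<Sum>j=1..J. if j \<le> l then 1 else 0)"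
  using sum_indicator_atMost[of l J] l_less_J by simp

text \<open>\<open>col0\<close>, \<open>- col0\<close> and \<open>2 - col0\<close> are the column \<open>0\<close> values of the heights of the three
  objectives below; they are interchanged by the reflections \<open>x \<mapsto> -x\<close> and
  \<open>x \<mapsto> 2 - x\<close>.\<close>
definition col0 :: "nat \<Rightarrow> int" where
  "col0 j = (if l < j then 1 else 0)"

definition height :: "(nat \<Rightarrow> int) \<Rightarrow> (nat \<Rightarrow> (nat \<times> int) multiset) \<Rightarrow>
    (nat \<Rightarrow> (nat \<times> int) multiset) \<Rightarrow> nat \<Rightarrow> nat \<Rightarrow> int" where
  "height c S T a j = profile n d (c j) a + (rows_ge (S a) j - rows_ge (T a) j)"

definition energy :: "(nat \<Rightarrow> nat \<Rightarrow> int) \<Rightarrow> int" where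
  "energy E = (\<Sum>j=1..J. \<Sum>a=0..n. (E a j - E (a + 1) j)\<^sup>2)"

definition joint_value :: "(nat \<Rightarrow> (nat \<times> int) multiset) \<Rightarrow> int" where
  "joint_value U = (\<Sum>j=1..J. 4 * parts_ge lam j * rows_ge (U 1) j
      + 2 * cartan_form n (\<lambda>a. rows_ge (U a) j)
      - 2 * rows_ge (U d) j - 2 * rows_ge (U (d - 1)) j
      - 2 * col0 j * rows_ge (U 1) j + (col0 j)\<^sup>2 + 1)
    - 4 * rig_total U"

lemma energy_identity:
  assumes S: "S \<in> C" and T: "T \<in> C"
  shows "4 * ((base_obj S - part_size S d) + (base_obj T - part_size T (d - 1)))
      + energy (height c S T)
    = joint_value (\<lambda>a. S a + T a)
      + (\<Sum>j=1..J. 2 * col0 j * (rows_ge (S 1) j + rows_ge (T 1) j) - (col0 j)\<^sup>2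
                 - 2 * c j * (rows_ge (S 1) j - rows_ge (T 1) j) + (c j)\<^sup>2)"
proof -
  define s where "s j a = rows_ge (S a) j" for j a
  define t where "t j a = rows_ge (T a) j" for j a
  have column: "4 * cartan_form n (s j) + 4 * cartan_form n (t j)
      + (\<Sum>a=0..n. (height c S T a j - height c S T (a + 1) j)\<^sup>2)
    = 2 * cartan_form n (\<lambda>a. s j a + t j a)
      + 2 * ((s j d - t j d) - (s j (d - 1) - t j (d - 1)) - c j * (s j 1 - t j 1)) + (c j)\<^sup>2 + 1"
    for j
    by (rule quadratic_identity[OF d_ge d_le])
      (simp_all add: s_def t_def height_def rows_ge_choice_outside[OF S] rows_ge_choice_outside[OF T])
  have "4 * ((base_obj S - part_size S d) + (base_obj T - part_size T (d - 1)))
      + energy (height c S T)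
    = (\<Sum>j=1..J. 4 * parts_ge lam j * s j 1 + 4 * parts_ge lam j * t j 1
        + (4 * cartan_form n (s j) + 4 * cartan_form n (t j)
           + (\<Sum>a=0..n. (height c S T a j - height c S T (a + 1) j)\<^sup>2))
        - 4 * s j d - 4 * t j (d - 1))
      - 4 * rig_total S - 4 * rig_total T"
    unfolding base_obj_eq_sum_cols[OF S] base_obj_eq_sum_cols[OF T] part_size_eq_sum_cols[OF S]
      part_size_eq_sum_cols[OF T] energy_def s_def t_def
    by (simp add: sum.distrib sum_subtractf sum_distrib_left algebra_simps)
  also have "\<dots> = (\<Sum>j=1..J. 4 * parts_ge lam j * (s j 1 + t j 1)
        + 2 * cartan_form n (\<lambda>a. s j a + t j a)
        - 2 * (s j d + t j d) - 2 * (s j (d - 1) + t j (d - 1))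
        - 2 * c j * (s j 1 - t j 1) + (c j)\<^sup>2 + 1)
      - 4 * rig_total S - 4 * rig_total T"
    unfolding column by (simp add: algebra_simps)
  also have "\<dots> = joint_value (\<lambda>a. S a + T a)
      + (\<Sum>j=1..J. 2 * col0 j * (s j 1 + t j 1) - (col0 j)\<^sup>2
                 - 2 * c j * (s j 1 - t j 1) + (c j)\<^sup>2)"
    by (simp add: joint_value_def rig_total_def s_def t_def sum.distrib sum_subtractf
        algebra_simps)
  finally show ?thesis by (simp add: s_def t_def)
qed

(* With lam = mu0_[k-1] and l = mu0_k, the maxima of these objectives over pairs of choices are
   tau_{k-1,d} + tau'_{k,d-1},  tau'_{k,d} + tau_{k-1,d-1}  and  tau_{k,d} + tau'_{k-1,d-1} - l,
   where tau' denotes the tau functions of bar_cfg cfg. *)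
definition obj_lhs :: "(nat \<Rightarrow> (nat \<times> int) multiset) \<Rightarrow> (nat \<Rightarrow> (nat \<times> int) multiset) \<Rightarrow> int" where
  "obj_lhs S T = (base_obj S - part_size S d) + (base_obj T + part_gain T - part_size T 1 - part_size T (d - 1))"

definition obj_rhs1 :: "(nat \<Rightarrow> (nat \<times> int) multiset) \<Rightarrow> (nat \<Rightarrow> (nat \<times> int) multiset) \<Rightarrow> int" where
  "obj_rhs1 S T = (base_obj S + part_gain S - part_size S 1 - part_size S d) + (base_obj T - part_size T (d - 1))"

definition obj_rhs2 :: "(nat \<Rightarrow> (nat \<times> int) multiset) \<Rightarrow> (nat \<Rightarrow> (nat \<times> int) multiset) \<Rightarrow> int" where
  "obj_rhs2 S T = (base_obj S + part_gain S - part_size S d) + (base_obj T - part_size T 1 - part_size T (d - 1))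
     - int l"

lemma energy_obj_lhs:
  assumes S: "S \<in> C" and T: "T \<in> C"
  shows "4 * obj_lhs S T + energy (height col0 S T) = joint_value (\<lambda>a. S a + T a)"
proof -
  have "part_gain T - part_size T 1 = - (\<Sum>j=1..J. col0 j * rows_ge (T 1) j)"
    unfolding part_gain_eq_sum_cols[OF T] part_size_eq_sum_cols[OF T]
    by (simp add: sum_subtractf[symmetric] sum_negf[symmetric]) (rule sum.cong; simp add: col0_def)
  moreover have "(\<Sum>j=1..J. 2 * col0 j * (rows_ge (S 1) j + rows_ge (T 1) j) - (col0 j)\<^sup>2
      - 2 * col0 j * (rows_ge (S 1) j - rows_ge (T 1) j) + (col0 j)\<^sup>2)
    = 4 * (\<Sum>j=1..J. col0 j * rows_ge (T 1) j)"
    by (simp add: sum_distrib_left) (rule sum.cong; simp add: algebra_simps)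
  ultimately show ?thesis
    using energy_identity[OF S T, of col0] unfolding obj_lhs_def by (smt (verit))
qed

lemma energy_obj_rhs1:
  assumes S: "S \<in> C" and T: "T \<in> C"
  shows "4 * obj_rhs1 S T + energy (height (\<lambda>j. - col0 j) S T) = joint_value (\<lambda>a. S a + T a)"
proof -
  have "part_gain S - part_size S 1 = - (\<Sum>j=1..J. col0 j * rows_ge (S 1) j)"
    unfolding part_gain_eq_sum_cols[OF S] part_size_eq_sum_cols[OF S]
    by (simp add: sum_subtractf[symmetric] sum_negf[symmetric]) (rule sum.cong; simp add: col0_def)
  moreover have "(\<Sum>j=1..J. 2 * col0 j * (rows_ge (S 1) j + rows_ge (T 1) j) - (col0 j)\<^sup>2
      - 2 * - col0 j * (rows_ge (S 1) j - rows_ge (T 1) j) + (- col0 j)\<^sup>2)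
    = 4 * (\<Sum>j=1..J. col0 j * rows_ge (S 1) j)"
    by (simp add: sum_distrib_left) (rule sum.cong; simp add: algebra_simps)
  ultimately show ?thesis
    using energy_identity[OF S T, of "\<lambda>j. - col0 j"] unfolding obj_rhs1_def by (smt (verit))
qed

lemma energy_obj_rhs2:
  assumes S: "S \<in> C" and T: "T \<in> C"
  shows "4 * obj_rhs2 S T + energy (height (\<lambda>j. 2 - col0 j) S T) = joint_value (\<lambda>a. S a + T a)"
proof -
  have "part_gain S - part_size T 1 - int l
      = (\<Sum>j=1..J. (1 - col0 j) * rows_ge (S 1) j - rows_ge (T 1) j - (1 - col0 j))"
    unfolding part_gain_eq_sum_cols[OF S] part_size_eq_sum_cols[OF T] l_eq_sum_cols
    by (simp add: sum_subtractf[symmetric]) (rule sum.cong; simp add: col0_def)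
  moreover have "(\<Sum>j=1..J. 2 * col0 j * (rows_ge (S 1) j + rows_ge (T 1) j) - (col0 j)\<^sup>2
      - 2 * (2 - col0 j) * (rows_ge (S 1) j - rows_ge (T 1) j) + (2 - col0 j)\<^sup>2)
    = - 4 * (\<Sum>j=1..J. (1 - col0 j) * rows_ge (S 1) j - rows_ge (T 1) j - (1 - col0 j))"
    by (simp add: sum_distrib_left) (rule sum.cong; simp add: col0_def algebra_simps power2_eq_square)
  ultimately show ?thesis
    using energy_identity[OF S T, of "\<lambda>j. 2 - col0 j"] unfolding obj_rhs2_def by (smt (verit))
qed

lemma exists_pair_with_col_diffs:
  assumes S: "S \<in> C" and T: "T \<in> C"
    and D_top: "\<forall>a\<in>{1..n}. \<forall>j\<ge>J. D a j = 0"
    and steps: "\<forall>a\<in>{1..n}. \<forall>j\<ge>1. \<bar>D a j - D a (j + 1)\<bar> \<le> rows_eq ((S a - T a) + (T a - S a)) j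
      \<and> even (D a j - D a (j + 1) + rows_eq ((S a - T a) + (T a - S a)) j)"
  shows "\<exists>S' T'. S' \<in> C \<and> T' \<in> C \<and> (\<forall>a. S' a + T' a = S a + T a)
    \<and> (\<forall>a\<in>{1..n}. \<forall>j\<ge>1. rows_ge (S' a) j - rows_ge (T' a) j = D a j)"
proof -
  have "\<exists>M N. M + N = S a + T a \<and> M \<subseteq># S a \<union># T a \<and> N \<subseteq># S a \<union># T a
      \<and> (\<forall>j\<ge>1. rows_ge M j - rows_ge N j = D a j)" if a: "a \<in> {1..n}" for a
  proof (rule redistribute_with_col_diffs)
    show "\<forall>p\<in>#S a + T a. 0 < fst p \<and> fst p < J"
      using choice_lengths[OF S] choice_lengths[OF T] by auto
  qed (use D_top steps a in auto)
  then obtain S0 T0 where S0T0: "\<And>a. a \<in> {1..n} \<Longrightarrow> S0 a + T0 a = S a + T a"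
    "\<And>a. a \<in> {1..n} \<Longrightarrow> S0 a \<subseteq># S a \<union># T a \<and> T0 a \<subseteq># S a \<union># T a"
    "\<And>a j. a \<in> {1..n} \<Longrightarrow> 1 \<le> j \<Longrightarrow> rows_ge (S0 a) j - rows_ge (T0 a) j = D a j"
    by metis
  define S' where "S' a = (if a \<in> {1..n} then S0 a else {#})" for a
  define T' where "T' a = (if a \<in> {1..n} then T0 a else {#})" for a
  have "S0 a \<subseteq># cfg a \<and> T0 a \<subseteq># cfg a" if "a \<in> {1..n}" for a
    using S0T0(2)[OF that] choice_subset[OF S that] choice_subset[OF T that]
    by (meson subset_mset.le_sup_iff subset_mset.order_trans)
  then have "S' \<in> C" "T' \<in> C" by (auto simp: choices_def S'_def T'_def)
  moreover have "S' a + T' a = S a + T a" for a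
    using S0T0(1) choice_outside[OF S] choice_outside[OF T] by (simp add: S'_def T'_def)
  moreover have "\<forall>a\<in>{1..n}. \<forall>j\<ge>1. rows_ge (S' a) j - rows_ge (T' a) j = D a j"
    using S0T0(3) by (simp add: S'_def T'_def)
  ultimately show ?thesis by blast
qed

section \<open>Exchange by folding\<close>

lemma height_left: "S \<in> C \<Longrightarrow> T \<in> C \<Longrightarrow> height c S T 0 j = c j"
  by (simp add: height_def profile_def rows_ge_choice_outside)

lemma height_right: "S \<in> C \<Longrightarrow> T \<in> C \<Longrightarrow> height c S T (n + 1) j = 1"
  by (simp add: height_def profile_def rows_ge_choice_outside)

lemma height_inner: "a \<in> {1..n} \<Longrightarrow> height c S T a j = profile n d 0 a + (rows_ge (S a) j - rows_ge (T a) j)"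
  by (simp add: height_def profile_def)

lemma height_step:
  "a \<in> {1..n} \<Longrightarrow> height c S T a j - height c S T a (j + 1) = rows_eq (S a - T a) j - rows_eq (T a - S a) j"
  using col_diff_step[of "S a" j "T a"] by (simp add: height_inner algebra_simps)

text \<open>The vertical steps of a height function count rows of one length in \<open>S a - T a\<close> and
  \<open>T a - S a\<close>, so dominated vertical steps can be realised by redistributing the rows of
  \<open>S a + T a\<close>; dominated horizontal steps do not increase the energy.\<close>
lemma exchange_by_map:
  fixes \<phi> :: "nat \<Rightarrow> nat \<Rightarrow> int \<Rightarrow> int" and c c' :: "nat \<Rightarrow> int"
  assumes S: "S \<in> C" and T: "T \<in> C"
  defines "H \<equiv> height c S T"
  assumes top: "\<forall>a\<in>{1..n}. \<forall>j\<ge>J. \<phi> a j (profile n d 0 a) = profile n d 0 a"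
    and vert: "\<forall>a\<in>{1..n}. \<forall>j\<ge>1.
      dominated_step (\<phi> a j (H a j) - \<phi> a (j + 1) (H a (j + 1))) (H a j - H a (j + 1))"
    and horiz: "\<forall>j\<in>{1..J}. \<forall>a\<le>n.
      dominated_step (\<phi> a j (H a j) - \<phi> (a + 1) j (H (a + 1) j)) (H a j - H (a + 1) j)"
    and bdry: "\<forall>j\<in>{1..J}. \<phi> 0 j (c j) = c' j \<and> \<phi> (n + 1) j 1 = 1"
  shows "\<exists>S' T'. S' \<in> C \<and> T' \<in> C \<and> (\<forall>a. S' a + T' a = S a + T a)
    \<and> energy (height c' S' T') \<le> energy H"
proof -
  define D where "D a j = \<phi> a j (H a j) - profile n d 0 a" for a j
  have D_top: "\<forall>a\<in>{1..n}. \<forall>j\<ge>J. D a j = 0"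
    using top by (simp add: D_def H_def height_inner rows_ge_choice_beyond[OF S] rows_ge_choice_beyond[OF T])
  have D_steps: "\<forall>a\<in>{1..n}. \<forall>j\<ge>1. \<bar>D a j - D a (j + 1)\<bar> \<le> rows_eq ((S a - T a) + (T a - S a)) j
      \<and> even (D a j - D a (j + 1) + rows_eq ((S a - T a) + (T a - S a)) j)"
  proof (intro ballI allI impI)
    fix a j :: nat assume a: "a \<in> {1..n}" and j: "1 \<le> j"
    have "dominated_step (\<phi> a j (H a j) - \<phi> a (j + 1) (H a (j + 1))) (H a j - H a (j + 1))"
      using vert a j by blast
    then have dom: "dominated_step (D a j - D a (j + 1)) (rows_eq (S a - T a) j - rows_eq (T a - S a) j)"
      using height_step[OF a, of c S T j] by (simp add: D_def H_def)
    have nonneg: "0 \<le> rows_eq M j" for M by (simp add: rows_eq_def)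
    have "\<bar>D a j - D a (j + 1)\<bar> \<le> rows_eq (S a - T a) j + rows_eq (T a - S a) j
      \<and> even (D a j - D a (j + 1) + (rows_eq (S a - T a) j + rows_eq (T a - S a) j))"
      by (rule dominated_step_within[OF dom nonneg nonneg])
    then show "\<bar>D a j - D a (j + 1)\<bar> \<le> rows_eq ((S a - T a) + (T a - S a)) j
      \<and> even (D a j - D a (j + 1) + rows_eq ((S a - T a) + (T a - S a)) j)"
      by simp
  qed
  obtain S' T' where S'T': "S' \<in> C" "T' \<in> C" "\<forall>a. S' a + T' a = S a + T a"
    "\<forall>a\<in>{1..n}. \<forall>j\<ge>1. rows_ge (S' a) j - rows_ge (T' a) j = D a j"
    using exists_pair_with_col_diffs[OF S T D_top D_steps] by blast
  have "height c' S' T' a j = \<phi> a j (H a j)" if a: "a \<le> n + 1" and j: "j \<in> {1..J}" for a j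
  proof -
    consider "a = 0" | "a \<in> {1..n}" | "a = n + 1" using a by fastforce
    then show ?thesis
      using bdry j S'T'(4) height_left[OF S T] height_right[OF S T]
        height_left[OF S'T'(1,2)] height_right[OF S'T'(1,2)]
      by cases (auto simp: H_def height_inner D_def)
  qed
  then have "energy (height c' S' T')
      = (\<Sum>j=1..J. \<Sum>a=0..n. (\<phi> a j (H a j) - \<phi> (a + 1) j (H (a + 1) j))\<^sup>2)"
    unfolding energy_def by (intro sum.cong refl) (simp del: One_nat_def)
  also have "\<dots> \<le> energy H"
    unfolding energy_def using horiz by (intro sum_mono dominated_step_sq) auto
  finally show ?thesis using S'T' by blast
qed

lemma obj_rhs1_le_obj_lhs:
  assumes S: "S \<in> C" and T: "T \<in> C"
  shows "\<exists>S'\<in>C. \<exists>T'\<in>C. obj_rhs1 S T \<le> obj_lhs S' T'"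
proof -
  have "\<exists>S' T'. S' \<in> C \<and> T' \<in> C \<and> (\<forall>a. S' a + T' a = S a + T a)
      \<and> energy (height col0 S' T') \<le> energy (height (\<lambda>j. - col0 j) S T)"
    by (rule exchange_by_map[OF S T, where \<phi> = "\<lambda>a j x. \<bar>x\<bar>"])
      (auto simp: dominated_step_abs profile_def col0_def)
  then obtain S' T' where S'T': "S' \<in> C" "T' \<in> C" "\<forall>a. S' a + T' a = S a + T a"
    "energy (height col0 S' T') \<le> energy (height (\<lambda>j. - col0 j) S T)"
    by blast
  then have "joint_value (\<lambda>a. S' a + T' a) = joint_value (\<lambda>a. S a + T a)" by simp
  then show ?thesis
    using energy_obj_rhs1[OF S T] energy_obj_lhs[OF S'T'(1,2)] S'T' by (intro bexI[of _ S'] bexI[of _ T']) linarith+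
qed

lemma obj_rhs2_le_obj_lhs:
  assumes S: "S \<in> C" and T: "T \<in> C"
  shows "\<exists>S'\<in>C. \<exists>T'\<in>C. obj_rhs2 S T \<le> obj_lhs S' T'"
proof -
  have "\<exists>S' T'. S' \<in> C \<and> T' \<in> C \<and> (\<forall>a. S' a + T' a = S a + T a)
      \<and> energy (height col0 S' T') \<le> energy (height (\<lambda>j. 2 - col0 j) S T)"
    by (rule exchange_by_map[OF S T, where \<phi> = "\<lambda>a j x. 1 - \<bar>x - 1\<bar>"])
      (auto simp: dominated_step_fold_one profile_def col0_def)
  then obtain S' T' where S'T': "S' \<in> C" "T' \<in> C" "\<forall>a. S' a + T' a = S a + T a"
    "energy (height col0 S' T') \<le> energy (height (\<lambda>j. 2 - col0 j) S T)"
    by blast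
  then have "joint_value (\<lambda>a. S' a + T' a) = joint_value (\<lambda>a. S a + T a)" by simp
  then show ?thesis
    using energy_obj_rhs2[OF S T] energy_obj_lhs[OF S'T'(1,2)] S'T' by (intro bexI[of _ S'] bexI[of _ T']) linarith+
qed

section \<open>Exchange by reflection\<close>

definition in_grid :: "int \<times> int \<Rightarrow> bool" where
  "in_grid p \<longleftrightarrow> 0 \<le> fst p \<and> fst p \<le> int n + 1 \<and> 1 \<le> snd p \<and> snd p \<le> int J"

definition grid_height :: "(nat \<Rightarrow> int) \<Rightarrow> (nat \<Rightarrow> (nat \<times> int) multiset) \<Rightarrow>
    (nat \<Rightarrow> (nat \<times> int) multiset) \<Rightarrow> int \<times> int \<Rightarrow> int" where
  "grid_height c S T p = height c S T (nat (fst p)) (nat (snd p))"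

definition reflect_on :: "(int \<times> int) set \<Rightarrow> int \<Rightarrow> nat \<Rightarrow> nat \<Rightarrow> int \<Rightarrow> int" where
  "reflect_on X v a j x = (if (int a, int j) \<in> X then 2 * v - x else x)"

lemma reflect_on_dominated:
  assumes X_sign: "\<forall>p\<in>X. \<forall>q. grid_adj p q \<and> q \<notin> X \<and> in_grid q
      \<longrightarrow> (grid_height c S T p - v) * (grid_height c S T q - v) \<le> 0"
    and adj: "grid_adj (int a, int j) (int b, int i)"
    and grid: "in_grid (int a, int j)" "in_grid (int b, int i)"
  defines "x \<equiv> height c S T a j" and "y \<equiv> height c S T b i"
  shows "dominated_step (reflect_on X v a j x - reflect_on X v b i y) (x - y)"
proof -
  have xy: "grid_height c S T (int a, int j) = x" "grid_height c S T (int b, int i) = y"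
    by (simp_all add: grid_height_def x_def y_def)
  consider "(int a, int j) \<in> X \<longleftrightarrow> (int b, int i) \<in> X"
    | "(int a, int j) \<in> X" "(int b, int i) \<notin> X"
    | "(int a, int j) \<notin> X" "(int b, int i) \<in> X"
    by blast
  then show ?thesis
  proof cases
    case 1
    then show ?thesis by (auto simp: reflect_on_def dominated_step_def abs_minus_commute)
  next
    case 2
    then have "(x - v) * (y - v) \<le> 0" using X_sign adj grid(2) xy by metis
    then show ?thesis using 2 dominated_step_reflect[of x v y] by (simp add: reflect_on_def)
  next
    case 3
    then have "(y - v) * (x - v) \<le> 0" using X_sign grid_adj_sym[OF adj] grid(1) xy by metis
    then have "dominated_step ((2 * v - y) - x) (y - x)" by (rule dominated_step_reflect)
    then show ?thesis using 3
      by (simp add: reflect_on_def dominated_step_def abs_minus_commute algebra_simps)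
  qed
qed

lemma exchange_by_reflection:
  assumes S: "S \<in> C" and T: "T \<in> C"
    and X_grid: "\<forall>p\<in>X. in_grid p"
    and X_sign: "\<forall>p\<in>X. \<forall>q. grid_adj p q \<and> q \<notin> X \<and> in_grid q
      \<longrightarrow> (grid_height c S T p - v) * (grid_height c S T q - v) \<le> 0"
    and X_top: "\<forall>a\<in>{1..n}. (int a, int J) \<notin> X"
    and X_right: "\<forall>j\<in>{1..J}. (int (n + 1), int j) \<notin> X"
    and bdry: "\<forall>j\<in>{1..J}. reflect_on X v 0 j (c j) = c' j"
  shows "\<exists>S' T'. S' \<in> C \<and> T' \<in> C \<and> (\<forall>a. S' a + T' a = S a + T a)
    \<and> energy (height c' S' T') \<le> energy (height c S T)"
proof (rule exchange_by_map[OF S T, where \<phi> = "reflect_on X v"])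
  have outside: "(int a, int j) \<notin> X" if "a \<in> {1..n}" "J \<le> j" for a j
    using X_top X_grid that by (cases "j = J") (auto simp: in_grid_def)
  then show "\<forall>a\<in>{1..n}. \<forall>j\<ge>J. reflect_on X v a j (profile n d 0 a) = profile n d 0 a"
    by (simp add: reflect_on_def)
  show "\<forall>a\<in>{1..n}. \<forall>j\<ge>1. dominated_step
      (reflect_on X v a j (height c S T a j) - reflect_on X v a (j + 1) (height c S T a (j + 1)))
      (height c S T a j - height c S T a (j + 1))"
  proof (intro ballI allI impI)
    fix a j :: nat assume a: "a \<in> {1..n}" and j: "1 \<le> j"
    show "dominated_step
      (reflect_on X v a j (height c S T a j) - reflect_on X v a (j + 1) (height c S T a (j + 1)))
      (height c S T a j - height c S T a (j + 1))"
    proof (cases "j + 1 \<le> J")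
      case True
      then show ?thesis
        using a j by (intro reflect_on_dominated[OF X_sign]) (auto simp: grid_adj_def in_grid_def)
    next
      case False
      then show ?thesis
        using outside[OF a, of j] outside[OF a, of "j + 1"]
        by (simp add: reflect_on_def dominated_step_def)
    qed
  qed
  show "\<forall>j\<in>{1..J}. \<forall>a\<le>n. dominated_step
      (reflect_on X v a j (height c S T a j) - reflect_on X v (a + 1) j (height c S T (a + 1) j))
      (height c S T a j - height c S T (a + 1) j)"
    by (intro ballI allI impI reflect_on_dominated[OF X_sign]) (auto simp: grid_adj_def in_grid_def)
  show "\<forall>j\<in>{1..J}. reflect_on X v 0 j (c j) = c' j \<and> reflect_on X v (n + 1) j 1 = 1"
    using bdry X_right by (simp add: reflect_on_def)
qed

end

locale tau_pair = tau_setting +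
  fixes S T :: "nat \<Rightarrow> (nat \<times> int) multiset"
  assumes S_in: "S \<in> choices n cfg" and T_in: "T \<in> choices n cfg"
begin

definition upper :: "(int \<times> int) set" where
  "upper = {p. in_grid p \<and> 1 \<le> grid_height col0 S T p}"

definition lower :: "(int \<times> int) set" where
  "lower = {p. in_grid p \<and> grid_height col0 S T p \<le> 0}"

definition upper_comp :: "(int \<times> int) set" where
  "upper_comp = {p. (adj_within upper)\<^sup>*\<^sup>* (0, int J) p}"

definition lower_comp :: "(int \<times> int) set" where
  "lower_comp = {p. (adj_within lower)\<^sup>*\<^sup>* (0, 1) p}"

lemma upper_lower_disjoint: "upper \<inter> lower = {}"
  by (auto simp: upper_def lower_def)

lemma left_in_upper: "int l < y \<Longrightarrow> y \<le> int J \<Longrightarrow> (0, y) \<in> upper"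
  using S_in T_in
  by (auto simp: upper_def in_grid_def grid_height_def height_def profile_def col0_def
      rows_ge_choice_outside)

lemma left_in_lower: "1 \<le> y \<Longrightarrow> y \<le> int l \<Longrightarrow> (0, y) \<in> lower"
  using S_in T_in l_less_J
  by (auto simp: lower_def in_grid_def grid_height_def height_def profile_def col0_def
      rows_ge_choice_outside)

lemma right_in_upper: "1 \<le> y \<Longrightarrow> y \<le> int J \<Longrightarrow> (int n + 1, y) \<in> upper"
proof -
  have "nat (int n + 1) = n + 1" by simp
  then show "1 \<le> y \<Longrightarrow> y \<le> int J \<Longrightarrow> (int n + 1, y) \<in> upper"
    using S_in T_in
    by (auto simp: upper_def in_grid_def grid_height_def height_def profile_def
        rows_ge_choice_outside)
qed

lemma top_in_upper: "int d \<le> x \<Longrightarrow> x \<le> int n + 1 \<Longrightarrow> (x, int J) \<in> upper"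
  using S_in T_in d_ge l_less_J
  by (cases "x = int n + 1")
    (auto simp: right_in_upper upper_def in_grid_def grid_height_def height_def profile_def
      rows_ge_choice_beyond)

lemma top_in_lower: "1 \<le> x \<Longrightarrow> x < int d \<Longrightarrow> (x, int J) \<in> lower"
  using S_in T_in d_le l_less_J
  by (auto simp: lower_def in_grid_def grid_height_def height_def profile_def
      rows_ge_choice_beyond)

lemma upper_comp_subset: "upper_comp \<subseteq> upper"
  using left_in_upper[of "int J"] l_less_J adj_walk_in by (auto simp: upper_comp_def)

lemma lower_comp_subset: "lower_comp \<subseteq> lower"
  using left_in_lower[of 1] l_pos adj_walk_in by (auto simp: lower_comp_def)

lemma component_sign:
  assumes "X \<subseteq> Y" and closed: "\<And>p q. p \<in> X \<Longrightarrow> adj_within Y p q \<Longrightarrow> q \<in> X"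
    and Y: "Y = {p. in_grid p \<and> 1 \<le> s * (grid_height col0 S T p - v)}" and s: "s = 1 \<or> s = -1"
  shows "\<forall>p\<in>X. \<forall>q. grid_adj p q \<and> q \<notin> X \<and> in_grid q
    \<longrightarrow> (grid_height col0 S T p - v) * (grid_height col0 S T q - v) \<le> 0"
proof (intro ballI allI impI)
  fix p q assume p: "p \<in> X" and q: "grid_adj p q \<and> q \<notin> X \<and> in_grid q"
  have "q \<notin> Y"
  proof
    assume "q \<in> Y"
    then have "adj_within Y p q" using p q \<open>X \<subseteq> Y\<close> by (auto simp: adj_within_def)
    then show False using closed[OF p] q by blast
  qed
  then have "s * (grid_height col0 S T q - v) \<le> 0" using q Y by auto
  moreover have "1 \<le> s * (grid_height col0 S T p - v)" using p \<open>X \<subseteq> Y\<close> Y by auto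
  ultimately show "(grid_height col0 S T p - v) * (grid_height col0 S T q - v) \<le> 0"
    using s by (auto simp: mult_nonneg_nonpos mult_nonpos_nonneg)
qed

lemma upper_comp_closed: "p \<in> upper_comp \<Longrightarrow> (adj_within upper)\<^sup>*\<^sup>* p q \<Longrightarrow> q \<in> upper_comp"
  by (simp add: upper_comp_def)

lemma lower_comp_closed: "p \<in> lower_comp \<Longrightarrow> (adj_within lower)\<^sup>*\<^sup>* p q \<Longrightarrow> q \<in> lower_comp"
  by (simp add: lower_comp_def)

lemma upper_comp_sign:
  "\<forall>p\<in>upper_comp. \<forall>q. grid_adj p q \<and> q \<notin> upper_comp \<and> in_grid q
    \<longrightarrow> (grid_height col0 S T p - 0) * (grid_height col0 S T q - 0) \<le> 0"
  by (rule component_sign[OF upper_comp_subset, of 1]) (auto simp: upper_def intro: upper_comp_closed)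

lemma lower_comp_sign:
  "\<forall>p\<in>lower_comp. \<forall>q. grid_adj p q \<and> q \<notin> lower_comp \<and> in_grid q
    \<longrightarrow> (grid_height col0 S T p - 1) * (grid_height col0 S T q - 1) \<le> 0"
  by (rule component_sign[OF lower_comp_subset, of "-1"]) (auto simp: lower_def intro: lower_comp_closed)

lemma upper_comp_left: "j \<in> {1..J} \<Longrightarrow> reflect_on upper_comp 0 0 j (col0 j) = - col0 j"
proof (cases "l < j")
  case True
  assume "j \<in> {1..J}"
  then have "(adj_within upper)\<^sup>*\<^sup>* (0, int j) (0, int J)"
    using True by (intro adj_walk_col) (auto intro: left_in_upper)
  then have "(0, int j) \<in> upper_comp" by (auto simp: upper_comp_def intro: adj_walk_sym)
  then show ?thesis using True by (simp add: reflect_on_def col0_def)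
next
  case False
  assume "j \<in> {1..J}"
  then have "(0, int j) \<notin> upper_comp"
    using False left_in_lower[of "int j"] upper_comp_subset upper_lower_disjoint by auto
  then show ?thesis using False by (simp add: reflect_on_def col0_def)
qed

lemma lower_comp_left: "j \<in> {1..J} \<Longrightarrow> reflect_on lower_comp 1 0 j (col0 j) = 2 - col0 j"
proof (cases "l < j")
  case False
  assume "j \<in> {1..J}"
  then have "(adj_within lower)\<^sup>*\<^sup>* (0, 1) (0, int j)"
    using False by (intro adj_walk_col) (auto intro: left_in_lower)
  then have "(0, int j) \<in> lower_comp" by (simp add: lower_comp_def)
  then show ?thesis using False by (simp add: reflect_on_def col0_def)
next
  case True
  assume "j \<in> {1..J}"
  then have "(0, int j) \<notin> lower_comp"
    using True left_in_upper[of "int j"] lower_comp_subset upper_lower_disjoint by auto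
  then show ?thesis using True by (simp add: reflect_on_def col0_def)
qed

lemma lower_comp_right: "j \<in> {1..J} \<Longrightarrow> (int (n + 1), int j) \<notin> lower_comp"
  using lower_comp_subset right_in_upper[of "int j"] upper_lower_disjoint by (auto simp: add.commute)

lemma upper_comp_right:
  assumes "(int d, int J) \<notin> upper_comp" "j \<in> {1..J}"
  shows "(int (n + 1), int j) \<notin> upper_comp"
proof
  assume "(int (n + 1), int j) \<in> upper_comp"
  then have "(int n + 1, int j) \<in> upper_comp" by (simp add: add.commute)
  moreover have "(adj_within upper)\<^sup>*\<^sup>* (int n + 1, int j) (int n + 1, int J)"
    using assms(2) by (intro adj_walk_col) (auto intro: right_in_upper)
  moreover have "(adj_within upper)\<^sup>*\<^sup>* (int n + 1, int J) (int d, int J)"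
    using d_le by (intro adj_walk_sym[OF adj_walk_row]) (auto intro: top_in_upper)
  ultimately show False using assms(1) upper_comp_closed rtranclp_trans by metis
qed

lemma upper_comp_top:
  assumes "(int d, int J) \<notin> upper_comp" "a \<in> {1..n}"
  shows "(int a, int J) \<notin> upper_comp"
proof
  assume in_comp: "(int a, int J) \<in> upper_comp"
  show False
  proof (cases "d \<le> a")
    case True
    have "(adj_within upper)\<^sup>*\<^sup>* (int d, int J) (int a, int J)"
      using True assms(2) by (intro adj_walk_row) (auto intro: top_in_upper)
    then show False using upper_comp_closed[OF in_comp] assms(1) adj_walk_sym by blast
  next
    case False
    then have "(int a, int J) \<in> lower" using assms(2) by (intro top_in_lower) auto
    then show False using in_comp upper_comp_subset upper_lower_disjoint by blast
  qed
qed

lemma lower_comp_top: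
  assumes "(int d - 1, int J) \<notin> lower_comp" "a \<in> {1..n}"
  shows "(int a, int J) \<notin> lower_comp"
proof
  assume in_comp: "(int a, int J) \<in> lower_comp"
  show False
  proof (cases "a < d")
    case True
    have "(adj_within lower)\<^sup>*\<^sup>* (int a, int J) (int d - 1, int J)"
      using True assms(2) by (intro adj_walk_row) (auto intro: top_in_lower)
    then show False using lower_comp_closed[OF in_comp] assms(1) by blast
  next
    case False
    then have "(int a, int J) \<in> upper" using assms(2) d_le by (intro top_in_upper) auto
    then show False using in_comp lower_comp_subset upper_lower_disjoint by blast
  qed
qed

lemma obj_lhs_le_obj_rhs1_if:
  assumes "(int d, int J) \<notin> upper_comp"
  shows "\<exists>S'\<in>C. \<exists>T'\<in>C. obj_lhs S T \<le> obj_rhs1 S' T'"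
proof -
  have grid: "\<forall>p\<in>upper_comp. in_grid p"
    using upper_comp_subset by (auto simp: upper_def)
  have "\<exists>S' T'. S' \<in> C \<and> T' \<in> C \<and> (\<forall>a. S' a + T' a = S a + T a)
      \<and> energy (height (\<lambda>j. - col0 j) S' T') \<le> energy (height col0 S T)"
    by (rule exchange_by_reflection[OF S_in T_in grid upper_comp_sign])
      (use upper_comp_left upper_comp_top[OF assms] upper_comp_right[OF assms] in auto)
  then obtain S' T' where S'T': "S' \<in> C" "T' \<in> C" "\<forall>a. S' a + T' a = S a + T a"
    "energy (height (\<lambda>j. - col0 j) S' T') \<le> energy (height col0 S T)"
    by blast
  then have "joint_value (\<lambda>a. S' a + T' a) = joint_value (\<lambda>a. S a + T a)" by simp
  then show ?thesis
    using energy_obj_lhs[OF S_in T_in] energy_obj_rhs1[OF S'T'(1,2)] S'T'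
    by (intro bexI[of _ S'] bexI[of _ T']) linarith+
qed

text \<open>Extend \<open>upper\<close> by one point left and right of the top row, and \<open>lower\<close> by one point
  below \<open>(0, 1)\<close> and above \<open>(d - 1, J)\<close>: a walk from \<open>(d - 1, J)\<close> down to \<open>(0, 1)\<close> inside
  \<open>lower\<close> would then cross the walk through \<open>upper\<close> along the top row.\<close>
lemma lower_comp_avoids_top:
  assumes "(int d, int J) \<in> upper_comp"
  shows "(int d - 1, int J) \<notin> lower_comp"
proof
  assume top_lower: "(int d - 1, int J) \<in> lower_comp"
  define U where "U = upper \<union> {(-1, int J), (int n + 2, int J)}"
  define W where "W = lower \<union> {(0, 0), (int d - 1, int J + 1)}"
  have disjoint: "U \<inter> W = {}"
    using upper_lower_disjoint by (auto simp: U_def W_def upper_def lower_def in_grid_def)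
  have box: "\<forall>p\<in>U \<union> W. -1 \<le> fst p \<and> fst p \<le> int n + 2 \<and> 0 \<le> snd p \<and> snd p \<le> int J + 1"
    using d_le by (auto simp: U_def W_def upper_def lower_def in_grid_def)
  have walk_U: "(adj_within U)\<^sup>*\<^sup>* (-1, int J) (int n + 2, int J)"
  proof -
    have "upper \<subseteq> U" by (auto simp: U_def)
    moreover have "(adj_within upper)\<^sup>*\<^sup>* (int d, int J) (int n + 1, int J)"
      using d_le by (intro adj_walk_row) (auto intro: top_in_upper)
    ultimately have "(adj_within U)\<^sup>*\<^sup>* (0, int J) (int d, int J)"
      "(adj_within U)\<^sup>*\<^sup>* (int d, int J) (int n + 1, int J)"
      using assms by (auto simp: upper_comp_def intro: adj_walk_mono)
    moreover have "adj_within U (-1, int J) (0, int J)"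
      "adj_within U (int n + 1, int J) (int n + 2, int J)"
      using left_in_upper[of "int J"] right_in_upper[of "int J"] l_less_J
      by (auto simp: U_def adj_within_def grid_adj_def)
    ultimately show ?thesis
      by (meson converse_rtranclp_into_rtranclp rtranclp.rtrancl_into_rtrancl rtranclp_trans)
  qed
  have walk_W: "(adj_within W)\<^sup>*\<^sup>* (0, 0) (int d - 1, int J + 1)"
  proof -
    have "lower \<subseteq> W" by (auto simp: W_def)
    then have "(adj_within W)\<^sup>*\<^sup>* (0, 1) (int d - 1, int J)"
      using top_lower by (auto simp: lower_comp_def intro: adj_walk_mono)
    moreover have "adj_within W (0, 0) (0, 1)"
      "adj_within W (int d - 1, int J) (int d - 1, int J + 1)"
      using left_in_lower[of 1] top_in_lower[of "int d - 1"] l_pos d_ge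
      by (auto simp: W_def adj_within_def grid_adj_def)
    ultimately show ?thesis
      by (meson converse_rtranclp_into_rtranclp rtranclp.rtrancl_into_rtrancl)
  qed
  show False
    by (rule grid_walks_cross[OF disjoint box walk_U _ walk_W]) (auto simp: U_def W_def)
qed

lemma obj_lhs_le_obj_rhs2_if:
  assumes "(int d - 1, int J) \<notin> lower_comp"
  shows "\<exists>S'\<in>C. \<exists>T'\<in>C. obj_lhs S T \<le> obj_rhs2 S' T'"
proof -
  have grid: "\<forall>p\<in>lower_comp. in_grid p"
    using lower_comp_subset by (auto simp: lower_def)
  have "\<exists>S' T'. S' \<in> C \<and> T' \<in> C \<and> (\<forall>a. S' a + T' a = S a + T a)
      \<and> energy (height (\<lambda>j. 2 - col0 j) S' T') \<le> energy (height col0 S T)"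
    by (rule exchange_by_reflection[OF S_in T_in grid lower_comp_sign])
      (use lower_comp_left lower_comp_top[OF assms] lower_comp_right in auto)
  then obtain S' T' where S'T': "S' \<in> C" "T' \<in> C" "\<forall>a. S' a + T' a = S a + T a"
    "energy (height (\<lambda>j. 2 - col0 j) S' T') \<le> energy (height col0 S T)"
    by blast
  then have "joint_value (\<lambda>a. S' a + T' a) = joint_value (\<lambda>a. S a + T a)" by simp
  then show ?thesis
    using energy_obj_lhs[OF S_in T_in] energy_obj_rhs2[OF S'T'(1,2)] S'T'
    by (intro bexI[of _ S'] bexI[of _ T']) linarith+
qed

lemma obj_lhs_le_obj_rhs:
  "\<exists>S'\<in>C. \<exists>T'\<in>C. obj_lhs S T \<le> obj_rhs1 S' T' \<or> obj_lhs S T \<le> obj_rhs2 S' T'"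
  using obj_lhs_le_obj_rhs1_if obj_lhs_le_obj_rhs2_if lower_comp_avoids_top by blast

end

context tau_setting
begin

lemma tau_obj_eq_base_obj: "1 \<le> dd \<Longrightarrow> tau_obj n lam S dd = base_obj S - part_size S dd"
  by (subst tau_obj_eq_tau_obj_top) (simp add: base_obj_def part_size_def)

lemma tau_eq_Max: "1 \<le> dd \<Longrightarrow> tau n cfg lam dd = Max ((\<lambda>S. base_obj S - part_size S dd) ` C)"
  by (simp add: tau_def tau_obj_eq_base_obj)

lemma tau_obj_add_part_eq_base_obj:
  "1 \<le> dd \<Longrightarrow> tau_obj n (add_mset l lam) S dd = base_obj S + part_gain S - part_size S dd"
  unfolding tau_obj_add_part by (simp add: tau_obj_eq_base_obj part_gain_def)

lemma tau_add_part_eq_Max: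
  "1 \<le> dd \<Longrightarrow> tau n cfg (add_mset l lam) dd = Max ((\<lambda>S. base_obj S + part_gain S - part_size S dd) ` C)"
  by (simp add: tau_def tau_obj_add_part_eq_base_obj)

lemma tau_bar_eq_Max:
  assumes "1 \<le> dd"
  shows "tau n (bar_cfg cfg) lam dd = Max ((\<lambda>S. base_obj S - part_size S dd - part_size S 1) ` C)"
proof -
  have "tau_obj n lam (shift_first S) dd = base_obj S - part_size S dd - part_size S 1" for S
    unfolding tau_obj_shift_first[OF n_pos] using assms n_pos
    by (simp add: tau_obj_eq_base_obj part_size_def)
  then show ?thesis using assms by (simp add: tau_def choices_bar_cfg[OF n_pos] image_image)
qed

lemma tau_bar_add_part_eq_Max:
  assumes "1 \<le> dd"
  shows "tau n (bar_cfg cfg) (add_mset l lam) dd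
     = Max ((\<lambda>S. base_obj S + part_gain S - part_size S dd - part_size S 1) ` C)"
proof -
  have "tau_obj n (add_mset l lam) (shift_first S) dd
      = base_obj S + part_gain S - part_size S dd - part_size S 1" for S
    unfolding tau_obj_shift_first[OF n_pos] using assms n_pos
    by (simp add: tau_obj_add_part_eq_base_obj part_size_def)
  then show ?thesis using assms by (simp add: tau_def choices_bar_cfg[OF n_pos] image_image)
qed

lemma d_pos: "1 \<le> d" "1 \<le> d - 1"
  using d_ge by simp_all

lemma choices_finite_nonempty: "finite C" "C \<noteq> {}"
  using finite_choices[of n cfg] empty_choice[of n cfg] by blast+

lemma lhs_eq_Max_obj_lhs:
  "tau n cfg lam d + tau n (bar_cfg cfg) (add_mset l lam) (d - 1)
     = Max ((\<lambda>(S, T). obj_lhs S T) ` (C \<times> C))"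
  unfolding tau_eq_Max[OF d_pos(1)] tau_bar_add_part_eq_Max[OF d_pos(2)]
  using choices_finite_nonempty
  by (subst Max_add_Max) (auto simp: obj_lhs_def intro!: arg_cong[where f = Max] image_cong)

lemma rhs1_eq_Max_obj_rhs1:
  "tau n (bar_cfg cfg) (add_mset l lam) d + tau n cfg lam (d - 1)
     = Max ((\<lambda>(S, T). obj_rhs1 S T) ` (C \<times> C))"
  unfolding tau_eq_Max[OF d_pos(2)] tau_bar_add_part_eq_Max[OF d_pos(1)]
  using choices_finite_nonempty
  by (subst Max_add_Max) (auto simp: obj_rhs1_def intro!: arg_cong[where f = Max] image_cong)

lemma rhs2_eq_Max_obj_rhs2:
  "tau n cfg (add_mset l lam) d + tau n (bar_cfg cfg) lam (d - 1) - int l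
     = Max ((\<lambda>(S, T). obj_rhs2 S T) ` (C \<times> C))"
proof -
  let ?f = "\<lambda>(S, T). (base_obj S + part_gain S - part_size S d)
    + (base_obj T - part_size T (d - 1) - part_size T 1)"
  have "tau n cfg (add_mset l lam) d + tau n (bar_cfg cfg) lam (d - 1) = Max (?f ` (C \<times> C))"
    unfolding tau_add_part_eq_Max[OF d_pos(1)] tau_bar_eq_Max[OF d_pos(2)]
    using choices_finite_nonempty by (subst Max_add_Max) auto
  moreover have "Max (?f ` (C \<times> C)) - int l = Max ((\<lambda>x. ?f x + - int l) ` (C \<times> C))"
    using Max_add_commute[of "C \<times> C" ?f "- int l"] choices_finite_nonempty by simp
  ultimately show ?thesis
    by (simp only:) (intro arg_cong[where f = Max] image_cong, auto simp: obj_rhs2_def)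
qed

lemma main_identity:
  "tau n cfg lam d + tau n (bar_cfg cfg) (add_mset l lam) (d - 1)
   = max (tau n (bar_cfg cfg) (add_mset l lam) d + tau n cfg lam (d - 1))
         (tau n cfg (add_mset l lam) d + tau n (bar_cfg cfg) lam (d - 1) - int l)"
  unfolding lhs_eq_Max_obj_lhs rhs1_eq_Max_obj_rhs1 rhs2_eq_Max_obj_rhs2
proof (rule Max_eq_max_if_dominated)
  show "\<forall>x\<in>C \<times> C. \<exists>y\<in>C \<times> C. (\<lambda>(S, T). obj_rhs1 S T) x \<le> (\<lambda>(S, T). obj_lhs S T) y"
    using obj_rhs1_le_obj_lhs by fastforce
  show "\<forall>x\<in>C \<times> C. \<exists>y\<in>C \<times> C. (\<lambda>(S, T). obj_rhs2 S T) x \<le> (\<lambda>(S, T). obj_lhs S T) y"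
    using obj_rhs2_le_obj_lhs by fastforce
  have "tau_pair n d cfg l J S T" if "S \<in> C" "T \<in> C" for S T
    using that tau_setting_axioms by (simp add: tau_pair_def tau_pair_axioms_def)
  then show "\<forall>x\<in>C \<times> C. \<exists>y\<in>C \<times> C. (\<lambda>(S, T). obj_lhs S T) x \<le> (\<lambda>(S, T). obj_rhs1 S T) y
      \<or> (\<lambda>(S, T). obj_lhs S T) x \<le> (\<lambda>(S, T). obj_rhs2 S T) y"
    using tau_pair.obj_lhs_le_obj_rhs by fastforce
qed (use choices_finite_nonempty in auto)

end

theorem proposition5p1:
  fixes n :: nat and mu0 :: "nat list" and cfg :: "nat \<Rightarrow> (nat \<times> int) multiset"
    and k d :: nat
  assumes "1 \<le> n"
    and "rigged_config n mu0 cfg"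
    and "1 \<le> k" and "k \<le> length mu0"
    and "2 \<le> d" and "d \<le> n + 1"
  shows "tauk n mu0 cfg (k - 1) d + tauk n mu0 (bar_cfg cfg) k (d - 1)
       = max (tauk n mu0 (bar_cfg cfg) k d + tauk n mu0 cfg (k - 1) (d - 1))
             (tauk n mu0 cfg k d + tauk n mu0 (bar_cfg cfg) (k - 1) (d - 1) - int (mu0 ! (k - 1)))"
proof -
  define l where "l = mu0 ! (k - 1)"
  define J where "J = l + 1 + (\<Sum>a=1..n. sum_mset (image_mset fst (cfg a)))"
  have k: "k - 1 < length mu0" using assms(3,4) by simp
  have "1 \<le> l" using assms(2) nth_mem[OF k] by (auto simp: rigged_config_def l_def)
  moreover have "0 < fst p \<and> fst p < J" if "a \<in> {1..n}" "p \<in># cfg a" for a p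
  proof -
    have "fst p \<le> sum_mset (image_mset fst (cfg a))"
      using that(2) by (metis multi_member_split image_mset_add_mset sum_mset.insert le_add1)
    also have "\<dots> \<le> (\<Sum>a=1..n. sum_mset (image_mset fst (cfg a)))"
      using that(1) by (intro member_le_sum) auto
    finally show ?thesis using assms(2) that by (auto simp: rigged_config_def J_def)
  qed
  ultimately interpret tau_setting n d cfg "mset (take (k - 1) mu0)" l J
    using assms(5,6) by unfold_locales (auto simp: J_def)
  have "mset (take k mu0) = add_mset l (mset (take (k - 1) mu0))"
    using take_Suc_conv_app_nth[OF k] assms(3) by (simp add: l_def)
  then show ?thesis
    unfolding tauk_def l_def[symmetric] using main_identity by simp
qed

end
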